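(* Let $\mathcal{H}_C$ and $\mathcal{H}_P$ be finite-dimensional complex Hilbert spaces and let $\rho$ be any (possibly mixed) state on $\mathcal{H}_C\otimes\mathcal{H}_P$. Then $\mathcal{D}(P|C)\le Q(\rho)$, i.e. the quantum discord of $\rho$ is at most its measurement-induced disturbance (for every admissible choice of eigenbases in the definition of $\Pi$).
   Context: All entropies are von Neumann entropies $S(\sigma)=-\mathrm{Tr}\,\sigma\ln\sigma$. For a state $\rho$ on $\mathcal{H}_C\otimes\mathcal{H}_P$ write $\rho_C=\mathrm{Tr}_P\rho$, $\rho_P=\mathrm{Tr}_C\rho$, $S(C)=S(\rho_C)$, $S(P,C)=S(\rho)$, $S(P|C)=S(P,C)-S(C)$, and mutual information $I(\rho)=S(\rho_C)+S(\rho_P)-S(\rho)$. Measurement-induced disturbance: write spectral decompositions $\rho_C=\sum_i p_C^i\Pi_C^i$ and $\rho_P=\sum_j p_P^j\Pi_P^j$ with $\{\Pi_C^i\}$, $\{\Pi_P^j\}$ rank-one projectors onto orthonormal eigenbases of $\rho_C$ and $\rho_P$; set $\Pi(\rho)=\sum_{i,j}(\Pi_C^i\otimes\Pi_P^j)\rho(\Pi_C^i\otimes\Pi_P^j)$ and $Q(\rho)=I(\rho)-I(\Pi(\rho))$. Quantum discord: for a rank-one projective measurement $\{N_j^C\}$ on $\mathcal{H}_C$, let $p_j=\mathrm{Tr}[(N_j^C\otimes\mathbb{1}_P)\rho]$, $\rho_{P|j}=\mathrm{Tr}_C[(N_j^C\otimes\mathbb{1}_P)\rho]/p_j$ for $p_j>0$,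 and $S(P|\{N_j^C\})=\sum_j p_jS(\rho_{P|j})$. Then $\mathcal{D}(P|C)=\min_{\{N_j^C\}}S(P|\{N_j^C\})-S(P|C)$, minimum over all rank-one projective measurements on $C$. *)

theory Defs
  imports "Jordan_Normal_Form.Spectral_Radius" "HOL-Computational_Algebra.Fundamental_Theorem_Algebra"
begin

text \<open>Finite-dimensional setting: H_C = C^m, H_P = C^n, H_C (x) H_P = C^(m*n),
  with the basis vector e_i (x) f_j of the tensor product identified with index i*n + j.\<close>

definition mtrace :: "complex mat \<Rightarrow> complex" where
  "mtrace A = (\<Sum>i<dim_row A. A $$ (i, i))"

definition adj :: "complex mat \<Rightarrow> complex mat" where
  "adj A = mat (dim_col A) (dim_row A) (\<lambda>(i, j). cnj (A $$ (j, i)))"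

definition qform :: "complex mat \<Rightarrow> complex vec \<Rightarrow> complex" where
  "qform A v = (\<Sum>i<dim_vec v. \<Sum>j<dim_vec v. cnj (v $ i) * A $$ (i, j) * v $ j)"

definition density :: "nat \<Rightarrow> complex mat \<Rightarrow> bool" where
  "density d A \<longleftrightarrow> A \<in> carrier_mat d d \<and> adj A = A \<and>
     (\<forall>v \<in> carrier_vec d. Im (qform A v) = 0 \<and> Re (qform A v) \<ge> 0) \<and> mtrace A = 1"

text \<open>Von Neumann entropy S(sigma) = - Tr sigma ln sigma, written out through the
  eigenvalues (with multiplicity, i.e. roots of the characteristic polynomial)
  of the Hermitian matrix sigma; note ln 0 = 0 in Isabelle, so 0 ln 0 = 0.\<close>
definition vN_entropy :: "complex mat \<Rightarrow> real" where
  "vN_entropy A = - (\<Sum>x\<in>#proots (char_poly A). Re x * ln (Re x))"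

definition kron :: "nat \<Rightarrow> nat \<Rightarrow> complex mat \<Rightarrow> complex mat \<Rightarrow> complex mat" where
  "kron m n A B = mat (m * n) (m * n)
     (\<lambda>(r, c). A $$ (r div n, c div n) * B $$ (r mod n, c mod n))"

definition ptrace_P :: "nat \<Rightarrow> nat \<Rightarrow> complex mat \<Rightarrow> complex mat" where
  "ptrace_P m n R = mat m m (\<lambda>(i, i'). \<Sum>j<n. R $$ (i * n + j, i' * n + j))"

definition ptrace_C :: "nat \<Rightarrow> nat \<Rightarrow> complex mat \<Rightarrow> complex mat" where
  "ptrace_C m n R = mat n n (\<lambda>(j, j'). \<Sum>i<m. R $$ (i * n + j, i * n + j'))"

definition proj :: "complex vec \<Rightarrow> complex mat" where
  "proj v = mat (dim_vec v) (dim_vec v) (\<lambda>(i, j). v $ i * cnj (v $ j))"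

definition onb :: "nat \<Rightarrow> (nat \<Rightarrow> complex vec) \<Rightarrow> bool" where
  "onb d w \<longleftrightarrow> (\<forall>k<d. w k \<in> carrier_vec d) \<and>
     (\<forall>k<d. \<forall>l<d. (\<Sum>i<d. cnj (w k $ i) * (w l $ i)) = (if k = l then 1 else 0))"

definition eigenbasis :: "nat \<Rightarrow> complex mat \<Rightarrow> (nat \<Rightarrow> complex vec) \<Rightarrow> bool" where
  "eigenbasis d A u \<longleftrightarrow> onb d u \<and> (\<forall>k<d. \<exists>c. A *\<^sub>v u k = c \<cdot>\<^sub>v u k)"

definition red_C :: "nat \<Rightarrow> nat \<Rightarrow> complex mat \<Rightarrow> complex mat" where
  "red_C m n R = ptrace_P m n R"

definition red_P :: "nat \<Rightarrow> nat \<Rightarrow> complex mat \<Rightarrow> complex mat" where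
  "red_P m n R = ptrace_C m n R"

definition mutual_info :: "nat \<Rightarrow> nat \<Rightarrow> complex mat \<Rightarrow> real" where
  "mutual_info m n R = vN_entropy (red_C m n R) + vN_entropy (red_P m n R) - vN_entropy R"

definition dephase :: "nat \<Rightarrow> nat \<Rightarrow> (nat \<Rightarrow> complex vec) \<Rightarrow> (nat \<Rightarrow> complex vec)
    \<Rightarrow> complex mat \<Rightarrow> complex mat" where
  "dephase m n u v R = mat (m * n) (m * n) (\<lambda>(r, c).
     \<Sum>i<m. \<Sum>j<n. (kron m n (proj (u i)) (proj (v j)) * R * kron m n (proj (u i)) (proj (v j))) $$ (r, c))"

definition MID :: "nat \<Rightarrow> nat \<Rightarrow> (nat \<Rightarrow> complex vec) \<Rightarrow> (nat \<Rightarrow> complex vec)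
    \<Rightarrow> complex mat \<Rightarrow> real" where
  "MID m n u v R = mutual_info m n R - mutual_info m n (dephase m n u v R)"

definition meas_prob :: "nat \<Rightarrow> nat \<Rightarrow> (nat \<Rightarrow> complex vec) \<Rightarrow> complex mat \<Rightarrow> nat \<Rightarrow> real" where
  "meas_prob m n w R j = Re (mtrace (kron m n (proj (w j)) (1\<^sub>m n) * R))"

definition cond_state :: "nat \<Rightarrow> nat \<Rightarrow> (nat \<Rightarrow> complex vec) \<Rightarrow> complex mat \<Rightarrow> nat \<Rightarrow> complex mat" where
  "cond_state m n w R j =
     (1 / complex_of_real (meas_prob m n w R j)) \<cdot>\<^sub>m ptrace_C m n (kron m n (proj (w j)) (1\<^sub>m n) * R)"

definition meas_cond_entropy :: "nat \<Rightarrow> nat \<Rightarrow> (nat \<Rightarrow> complex vec) \<Rightarrow> complex mat \<Rightarrow> real" where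
  "meas_cond_entropy m n w R =
     (\<Sum>j\<in>{j. j < m \<and> meas_prob m n w R j > 0}.
        meas_prob m n w R j * vN_entropy (cond_state m n w R j))"

definition cond_entropy :: "nat \<Rightarrow> nat \<Rightarrow> complex mat \<Rightarrow> real" where
  "cond_entropy m n R = vN_entropy R - vN_entropy (red_C m n R)"

text \<open>Quantum discord D(P|C): minimum (= infimum, which is attained) over all rank-one
  projective measurements on C, i.e. over all orthonormal bases of C^m.\<close>
definition discord :: "nat \<Rightarrow> nat \<Rightarrow> complex mat \<Rightarrow> real" where
  "discord m n R = (INF w \<in> {w. onb m w}. meas_cond_entropy m n w R) - cond_entropy m n R"

end

theory Submission
  imports Defs
begin

text \<open>Let u and v be the eigenbases of \<open>\<rho>\<^sub>C\<close> and \<open>\<rho>\<^sub>P\<close>, and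
  \<open>P\<^sub>i\<^sub>j = \<langle>u\<^sub>i\<otimes>v\<^sub>j|\<rho>|u\<^sub>i\<otimes>v\<^sub>j\<rangle>\<close>. Dephasing in the product basis does not change the
  marginals, so \<open>Q(\<rho>) = S(\<Pi>(\<rho>)) - S(\<rho>)\<close>, and \<open>S(\<Pi>(\<rho>))\<close> is the Shannon entropy of P.
  Measuring C in the basis u yields the outcome distribution \<open>p\<^sub>i = \<Sum>\<^sub>j P\<^sub>i\<^sub>j\<close>, whose Shannon
  entropy is \<open>S(\<rho>\<^sub>C)\<close>, and conditional states whose diagonal in the basis v is
  \<open>P\<^sub>i\<^sub>j / p\<^sub>i\<close>. The entropy of a state is at most the Shannon entropy of its diagonal in any
  orthonormal basis (convexity of \<open>x ln x\<close> applied through the doubly stochastic matrix of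
  overlaps with an eigenbasis), so by the chain rule for Shannon entropy
  \<open>S(P|{u}) \<le> S(\<Pi>(\<rho>)) - S(\<rho>\<^sub>C)\<close>. Subtracting \<open>S(P|C) = S(\<rho>) - S(\<rho>\<^sub>C)\<close> gives
  \<open>D(P|C) \<le> S(P|{u}) - S(P|C) \<le> Q(\<rho>)\<close>.\<close>

lemma index_mult_mat_sum:
  "A \<in> carrier_mat a b \<Longrightarrow> B \<in> carrier_mat b c \<Longrightarrow> i < a \<Longrightarrow> j < c \<Longrightarrow>
   (A * B) $$ (i, j) = (\<Sum>k<b. A $$ (i, k) * B $$ (k, j))"
  by (auto simp: scalar_prod_def lessThan_atLeast0 intro!: sum.cong)

lemma index_mult_mat_vec_sum:
  "A \<in> carrier_mat a b \<Longrightarrow> x \<in> carrier_vec b \<Longrightarrow> i < a \<Longrightarrow>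
   (A *\<^sub>v x) $ i = (\<Sum>k<b. A $$ (i, k) * x $ k)"
  by (auto simp: scalar_prod_def lessThan_atLeast0 intro!: sum.cong)

lemma smult_mat_mult_vec:
  assumes "X \<in> carrier_mat d e" "z \<in> carrier_vec e"
  shows "(c \<cdot>\<^sub>m X) *\<^sub>v z = c \<cdot>\<^sub>v (X *\<^sub>v z)"
proof (rule eq_vecI)
  fix i assume "i < dim_vec (c \<cdot>\<^sub>v (X *\<^sub>v z))"
  then show "((c \<cdot>\<^sub>m X) *\<^sub>v z) $ i = (c \<cdot>\<^sub>v (X *\<^sub>v z)) $ i"
    using assms index_mult_mat_vec_sum[of "c \<cdot>\<^sub>m X" d e z i] index_mult_mat_vec_sum[of X d e z i]
    by (simp add: sum_distrib_left mult.assoc)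
qed (use assms in simp)

lemma sum_lessThan_mult_nat: "(\<Sum>a<(m::nat) * n. f a) = (\<Sum>i<m. \<Sum>j<n. f (i * n + j))"
proof -
  have "(\<Sum>a<m * n. f a) = (\<Sum>i<m. \<Sum>a\<in>{i * n..<i * n + n}. f a)"
    by (simp only: sum.nat_group mult.commute[of m n])
  also have "\<dots> = (\<Sum>i<m. \<Sum>j<n. f (i * n + j))"
    using sum.shift_bounds_nat_ivl[of f 0 "i * n" n for i]
    by (simp add: lessThan_atLeast0 add.commute[of _ "_ * n"])
  finally show ?thesis .
qed

lemma mult_if_0:
  "x * (if P then y else 0) = (if P then x * y else (0 :: 'a :: mult_zero))"
  "(if P then y else 0) * x = (if P then y * x else 0)"
  by simp_all

lemma index_pair_less: "i < m \<Longrightarrow> j < n \<Longrightarrow> i * n + j < m * (n :: nat)"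
proof -
  assume "i < m" "j < n"
  then have "i * n + j < Suc i * n" by simp
  also have "\<dots> \<le> m * n" using \<open>i < m\<close> by (intro mult_right_mono) auto
  finally show ?thesis .
qed

lemma div_less_of_less_mult: "r < m * n \<Longrightarrow> r div n < (m :: nat)"
  by (simp add: less_mult_imp_div_less)

lemma mod_less_of_less_mult: "r < m * n \<Longrightarrow> r mod n < (n :: nat)"
  by (metis mod_less_divisor mult_zero_right not_gr_zero not_less_zero)

text \<open>Conjugate-linear in the first argument (the library's \<open>\<bullet>c\<close> conjugates the second).\<close>

definition cinner_vec :: "complex vec \<Rightarrow> complex vec \<Rightarrow> complex" where
  "cinner_vec x y = (\<Sum>i<dim_vec x. cnj (x $ i) * y $ i)"

lemma cinner_vec_smult_right:
  "y \<in> carrier_vec (dim_vec x) \<Longrightarrow> cinner_vec x (c \<cdot>\<^sub>v y) = c * cinner_vec x y"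
  by (auto simp: cinner_vec_def sum_distrib_left mult.left_commute intro!: sum.cong)

lemma cinner_vec_smult_left: "cinner_vec (c \<cdot>\<^sub>v x) y = cnj c * cinner_vec x y"
  by (auto simp: cinner_vec_def sum_distrib_left mult.left_commute intro!: sum.cong)

lemma cinner_vec_add_right:
  "x \<in> carrier_vec d \<Longrightarrow> y \<in> carrier_vec d \<Longrightarrow> z \<in> carrier_vec d \<Longrightarrow>
   cinner_vec x (y + z) = cinner_vec x y + cinner_vec x z"
  by (auto simp: cinner_vec_def distrib_left sum.distrib)

lemma cinner_vec_commute_cnj:
  "x \<in> carrier_vec d \<Longrightarrow> y \<in> carrier_vec d \<Longrightarrow> cinner_vec x y = cnj (cinner_vec y x)"
  by (auto simp: cinner_vec_def mult.commute)

lemma cinner_vec_self: "z \<in> carrier_vec d \<Longrightarrow> cinner_vec z z = of_real (\<Sum>i<d. (cmod (z $ i))\<^sup>2)"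
  unfolding cinner_vec_def of_real_sum
  by (intro sum.cong) (auto simp: complex_norm_square mult.commute simp del: of_real_power)

lemma cinner_vec_mult_mat_vec:
  assumes "A \<in> carrier_mat d d" "x \<in> carrier_vec d" "y \<in> carrier_vec d"
  shows "cinner_vec x (A *\<^sub>v y) = (\<Sum>a<d. \<Sum>b<d. cnj (x $ a) * A $$ (a, b) * y $ b)"
  using assms index_mult_mat_vec_sum[OF assms(1,3)]
  by (simp add: cinner_vec_def sum_distrib_left mult.assoc)

lemma qform_eq_cinner_vec:
  "A \<in> carrier_mat d d \<Longrightarrow> x \<in> carrier_vec d \<Longrightarrow> qform A x = cinner_vec x (A *\<^sub>v x)"
  by (simp add: cinner_vec_mult_mat_vec qform_def)

lemma cinner_vec_unit_vec_left: "x \<in> carrier_vec d \<Longrightarrow> r < d \<Longrightarrow> cinner_vec (unit_vec d r) x = x $ r"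
  by (simp add: cinner_vec_def unit_vec_def if_distrib[of cnj] mult_if_0 cong: if_cong)

lemma cinner_vec_unit_vec:
  "M \<in> carrier_mat d d \<Longrightarrow> a < d \<Longrightarrow> b < d \<Longrightarrow>
   cinner_vec (unit_vec d a) (M *\<^sub>v unit_vec d b) = M $$ (a, b)"
  by (simp add: cinner_vec_unit_vec_left)

lemma mat_eq_by_cinner_vec:
  assumes M: "M \<in> carrier_mat d d" and M': "M' \<in> carrier_mat d d"
    and eq: "\<And>x y. x \<in> carrier_vec d \<Longrightarrow> y \<in> carrier_vec d \<Longrightarrow>
               cinner_vec x (M *\<^sub>v y) = cinner_vec x (M' *\<^sub>v y)"
  shows "M = M'"
proof (rule eq_matI)
  fix a b assume "a < dim_row M'" "b < dim_col M'"
  then have "a < d" "b < d" using M' by auto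
  then show "M $$ (a, b) = M' $$ (a, b)"
    using cinner_vec_unit_vec[OF M] cinner_vec_unit_vec[OF M'] eq[of "unit_vec d a" "unit_vec d b"]
    by simp
qed (use M M' in auto)

lemma hermitian_entry:
  assumes "A \<in> carrier_mat d d" "adj A = A" "i < d" "j < d"
  shows "A $$ (i, j) = cnj (A $$ (j, i))"
proof -
  have "A $$ (i, j) = adj A $$ (i, j)" using assms by simp
  also have "\<dots> = cnj (A $$ (j, i))" using assms(1,3,4) unfolding adj_def by simp
  finally show ?thesis .
qed

lemma cinner_vec_hermitian:
  assumes A: "A \<in> carrier_mat d d" and h: "adj A = A"
    and x: "x \<in> carrier_vec d" and y: "y \<in> carrier_vec d"
  shows "cinner_vec x (A *\<^sub>v y) = cinner_vec (A *\<^sub>v x) y"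
proof -
  have "cinner_vec x (A *\<^sub>v y) = (\<Sum>a<d. \<Sum>b<d. cnj (x $ a) * A $$ (a, b) * y $ b)"
    by (rule cinner_vec_mult_mat_vec[OF A x y])
  also have "\<dots> = (\<Sum>b<d. \<Sum>a<d. cnj (A $$ (b, a) * x $ a) * y $ b)"
  proof (subst sum.swap, intro sum.cong refl)
    fix b a assume "b \<in> {..<d}" "a \<in> {..<d}"
    then have "A $$ (a, b) = cnj (A $$ (b, a))" using hermitian_entry[OF A h] by blast
    then show "cnj (x $ a) * A $$ (a, b) * y $ b = cnj (A $$ (b, a) * x $ a) * y $ b" by simp
  qed
  also have "\<dots> = cinner_vec (A *\<^sub>v x) y"
    using A x index_mult_mat_vec_sum[OF A x] by (simp add: cinner_vec_def sum_distrib_right)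
  finally show ?thesis .
qed

lemma onb_carrier: "onb d w \<Longrightarrow> k < d \<Longrightarrow> w k \<in> carrier_vec d"
  unfolding onb_def by auto

lemma onb_cinner_vec: "onb d w \<Longrightarrow> k < d \<Longrightarrow> l < d \<Longrightarrow> cinner_vec (w k) (w l) = (if k = l then 1 else 0)"
  unfolding onb_def cinner_vec_def by auto

lemma onb_unit_vec: "onb d (unit_vec d)"
  by (simp add: onb_def unit_vec_def if_distrib[of cnj] mult_if_0 cong: if_cong)

definition basis_mat :: "nat \<Rightarrow> (nat \<Rightarrow> complex vec) \<Rightarrow> complex mat" where
  "basis_mat d w = mat d d (\<lambda>(a, k). w k $ a)"

lemma dim_basis_mat [simp]: "dim_row (basis_mat d w) = d" "dim_col (basis_mat d w) = d"
  by (simp_all add: basis_mat_def)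

lemma basis_mat_carrier [simp]: "basis_mat d w \<in> carrier_mat d d"
  and adj_basis_mat_carrier [simp]: "adj (basis_mat d w) \<in> carrier_mat d d"
  by (simp_all add: basis_mat_def adj_def)

lemma onb_basis_mat_unitary:
  assumes w: "onb d w"
  shows "adj (basis_mat d w) * basis_mat d w = 1\<^sub>m d" "basis_mat d w * adj (basis_mat d w) = 1\<^sub>m d"
proof -
  show *: "adj (basis_mat d w) * basis_mat d w = 1\<^sub>m d"
  proof (rule eq_matI)
    fix i j assume "i < dim_row (1\<^sub>m d)" "j < dim_col (1\<^sub>m d)"
    then show "(adj (basis_mat d w) * basis_mat d w) $$ (i, j) = 1\<^sub>m d $$ (i, j)"
      using w index_mult_mat_sum[OF adj_basis_mat_carrier basis_mat_carrier, of i d j w]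
      by (simp add: basis_mat_def adj_def onb_def)
  qed (simp_all add: basis_mat_def adj_def)
  show "basis_mat d w * adj (basis_mat d w) = 1\<^sub>m d"
    by (rule mat_mult_left_right_inverse[OF adj_basis_mat_carrier basis_mat_carrier *])
qed

lemma onb_completeness:
  assumes w: "onb d w" and a: "a < d" and b: "b < d"
  shows "(\<Sum>k<d. w k $ a * cnj (w k $ b)) = (if a = b then 1 else 0)"
  using arg_cong[OF onb_basis_mat_unitary(2)[OF w], of "\<lambda>M. M $$ (a, b)"] a b
    index_mult_mat_sum[OF basis_mat_carrier adj_basis_mat_carrier a b]
  by (simp add: basis_mat_def adj_def)

lemma onb_completeness_cnj:
  "onb d w \<Longrightarrow> a < d \<Longrightarrow> b < d \<Longrightarrow> (\<Sum>k<d. cnj (w k $ a) * w k $ b) = (if a = b then 1 else 0)"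
proof -
  assume "onb d w" "a < d" "b < d"
  then have "(\<Sum>k<d. w k $ b * cnj (w k $ a)) = (if b = a then 1 else 0)"
    using onb_completeness by blast
  then show ?thesis by (simp add: mult.commute)
qed

lemma cinner_vec_expansion:
  assumes w: "onb d w" and A: "A \<in> carrier_mat d d"
    and A_eq: "\<And>a b. a < d \<Longrightarrow> b < d \<Longrightarrow> A $$ (a, b) = (\<Sum>k<d. \<gamma> k * w k $ a * cnj (w k $ b))"
    and x: "x \<in> carrier_vec d" and y: "y \<in> carrier_vec d"
  shows "cinner_vec x (A *\<^sub>v y) = (\<Sum>k<d. \<gamma> k * (cnj (cinner_vec (w k) x) * cinner_vec (w k) y))"
proof -
  have "cinner_vec x (A *\<^sub>v y) = (\<Sum>a<d. \<Sum>b<d. \<Sum>k<d. \<gamma> k * ((cnj (x $ a) * w k $ a) * (cnj (w k $ b) * y $ b)))"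
    unfolding cinner_vec_mult_mat_vec[OF A x y] using A_eq
    by (intro sum.cong refl) (simp add: sum_distrib_left sum_distrib_right mult_ac)
  also have "\<dots> = (\<Sum>k<d. \<gamma> k * ((\<Sum>a<d. cnj (x $ a) * w k $ a) * (\<Sum>b<d. cnj (w k $ b) * y $ b)))"
  proof -
    have "(\<Sum>a<d. \<Sum>b<d. \<Sum>k<d. \<gamma> k * ((cnj (x $ a) * w k $ a) * (cnj (w k $ b) * y $ b))) =
          (\<Sum>k<d. \<Sum>a<d. \<Sum>b<d. \<gamma> k * ((cnj (x $ a) * w k $ a) * (cnj (w k $ b) * y $ b)))"
      by (subst sum.swap, intro sum.cong refl sum.swap)
    also have "\<dots> = (\<Sum>k<d. \<gamma> k * ((\<Sum>a<d. cnj (x $ a) * w k $ a) * (\<Sum>b<d. cnj (w k $ b) * y $ b)))"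
      unfolding sum_product by (simp only: sum_distrib_left)
    finally show ?thesis .
  qed
  also have "\<dots> = (\<Sum>k<d. \<gamma> k * (cnj (cinner_vec (w k) x) * cinner_vec (w k) y))"
  proof (intro sum.cong refl)
    fix k assume "k \<in> {..<d}"
    then have "dim_vec (w k) = d" using onb_carrier[OF w] by auto
    then show "\<gamma> k * ((\<Sum>a<d. cnj (x $ a) * w k $ a) * (\<Sum>b<d. cnj (w k $ b) * y $ b)) =
               \<gamma> k * (cnj (cinner_vec (w k) x) * cinner_vec (w k) y)"
      by (simp add: cinner_vec_def mult.commute)
  qed
  finally show ?thesis .
qed

lemma parseval:
  assumes w: "onb d w" and x: "x \<in> carrier_vec d"
  shows "(\<Sum>k<d. cnj (cinner_vec (w k) x) * cinner_vec (w k) x) = cinner_vec x x"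
  using cinner_vec_expansion[OF w one_carrier_mat _ x x, of "\<lambda>_. 1"] onb_completeness[OF w] x
  by simp

lemma eigenbasis_expansion:
  assumes w: "onb d w" and M: "M \<in> carrier_mat d d"
    and eig: "\<And>k. k < d \<Longrightarrow> M *\<^sub>v w k = \<gamma> k \<cdot>\<^sub>v w k" and a: "a < d" and b: "b < d"
  shows "M $$ (a, b) = (\<Sum>k<d. \<gamma> k * w k $ a * cnj (w k $ b))"
proof -
  have "M $$ (a, b) = (\<Sum>c<d. M $$ (a, c) * (\<Sum>k<d. w k $ c * cnj (w k $ b)))"
    using onb_completeness[OF w _ b] b by (simp add: mult_if_0 sum.delta')
  also have "\<dots> = (\<Sum>k<d. (\<Sum>c<d. M $$ (a, c) * w k $ c) * cnj (w k $ b))"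
    unfolding sum_distrib_left sum_distrib_right by (subst sum.swap) (simp add: mult.assoc)
  also have "\<dots> = (\<Sum>k<d. \<gamma> k * w k $ a * cnj (w k $ b))"
  proof (intro sum.cong refl)
    fix k assume "k \<in> {..<d}"
    then have "k < d" "w k \<in> carrier_vec d" using onb_carrier[OF w] by auto
    then show "(\<Sum>c<d. M $$ (a, c) * w k $ c) * cnj (w k $ b) = \<gamma> k * w k $ a * cnj (w k $ b)"
      using eig index_mult_mat_vec_sum[OF M _ a, of "w k"] a by simp
  qed
  finally show ?thesis .
qed

lemma mtrace_add: "X \<in> carrier_mat d d \<Longrightarrow> Y \<in> carrier_mat d d \<Longrightarrow> mtrace (X + Y) = mtrace X + mtrace Y"
  by (simp add: mtrace_def sum.distrib)

lemma mtrace_smult: "X \<in> carrier_mat d d \<Longrightarrow> mtrace (c \<cdot>\<^sub>m X) = c * mtrace X"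
  by (simp add: mtrace_def sum_distrib_left)

lemma mtrace_mult_comm:
  assumes "X \<in> carrier_mat d e" "Y \<in> carrier_mat e d"
  shows "mtrace (X * Y) = mtrace (Y * X)"
proof -
  have "mtrace (X * Y) = (\<Sum>i<d. \<Sum>k<e. X $$ (i, k) * Y $$ (k, i))"
    using assms index_mult_mat_sum[OF assms] by (simp add: mtrace_def)
  also have "\<dots> = (\<Sum>k<e. \<Sum>i<d. Y $$ (k, i) * X $$ (i, k))"
    by (subst sum.swap) (simp add: mult.commute)
  also have "\<dots> = mtrace (Y * X)"
    using assms index_mult_mat_sum[OF assms(2,1)] by (simp add: mtrace_def)
  finally show ?thesis .
qed

lemma mtrace_similar:
  assumes "similar_mat B T" "B \<in> carrier_mat d d"
  shows "mtrace B = mtrace T"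
proof -
  obtain P Q where "similar_mat_wit B T P Q" using assms unfolding similar_mat_def by blast
  then have c: "T \<in> carrier_mat d d" "P \<in> carrier_mat d d" "Q \<in> carrier_mat d d"
    and QP: "Q * P = 1\<^sub>m d" and B: "B = P * T * Q"
    using assms(2) unfolding similar_mat_wit_def Let_def by auto
  have "mtrace B = mtrace (Q * (P * T))" unfolding B by (rule mtrace_mult_comm) (use c in auto)
  also have "Q * (P * T) = T" using c QP by (simp add: assoc_mult_mat[symmetric])
  finally show ?thesis .
qed

lemma mtrace_onb:
  assumes w: "onb d w" and M: "M \<in> carrier_mat d d"
  shows "mtrace M = (\<Sum>k<d. cinner_vec (w k) (M *\<^sub>v w k))"
proof -
  have "(\<Sum>k<d. cinner_vec (w k) (M *\<^sub>v w k)) = (\<Sum>k<d. \<Sum>a<d. \<Sum>b<d. cnj (w k $ a) * M $$ (a, b) * w k $ b)"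
    using cinner_vec_mult_mat_vec[OF M onb_carrier[OF w] onb_carrier[OF w]] by simp
  also have "\<dots> = (\<Sum>a<d. \<Sum>b<d. \<Sum>k<d. cnj (w k $ a) * M $$ (a, b) * w k $ b)"
    by (subst sum.swap, intro sum.cong refl sum.swap)
  also have "\<dots> = (\<Sum>a<d. \<Sum>b<d. M $$ (a, b) * (\<Sum>k<d. cnj (w k $ a) * w k $ b))"
    by (simp add: sum_distrib_left mult_ac)
  also have "\<dots> = mtrace M"
    using M by (simp add: onb_completeness_cnj[OF w] mult_if_0 mtrace_def)
  finally show ?thesis ..
qed

lemma eigenvector_of_expansion:
  assumes w: "onb d w" and M: "M \<in> carrier_mat d d"
    and M_eq: "\<And>a b. a < d \<Longrightarrow> b < d \<Longrightarrow> M $$ (a, b) = (\<Sum>k<d. \<gamma> k * w k $ a * cnj (w k $ b))"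
    and l: "l < d"
  shows "M *\<^sub>v w l = \<gamma> l \<cdot>\<^sub>v w l"
proof (rule eq_vecI)
  have wl: "w l \<in> carrier_vec d" using onb_carrier[OF w l] .
  fix r assume "r < dim_vec (\<gamma> l \<cdot>\<^sub>v w l)"
  then have r: "r < d" using wl by simp
  have "(M *\<^sub>v w l) $ r = cinner_vec (unit_vec d r) (M *\<^sub>v w l)"
    using M wl r by (simp add: cinner_vec_unit_vec_left)
  also have "\<dots> = (\<Sum>k<d. \<gamma> k * (cnj (cinner_vec (w k) (unit_vec d r)) * cinner_vec (w k) (w l)))"
    by (rule cinner_vec_expansion[OF w M M_eq unit_vec_carrier wl])
  also have "\<dots> = \<gamma> l * w l $ r"
    using onb_cinner_vec[OF w _ l] onb_carrier[OF w l] l r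
    by (simp add: mult_if_0 cinner_vec_def if_distrib[of cnj] cong: if_cong)
  finally show "(M *\<^sub>v w l) $ r = (\<gamma> l \<cdot>\<^sub>v w l) $ r" using r wl by simp
qed (use M onb_carrier[OF w l] in simp)

lemma eigenbasis_eigenvalue:
  assumes e: "eigenbasis d M u" and M: "M \<in> carrier_mat d d" and k: "k < d"
  shows "M *\<^sub>v u k = cinner_vec (u k) (M *\<^sub>v u k) \<cdot>\<^sub>v u k"
proof -
  have u: "onb d u" using e unfolding eigenbasis_def by auto
  obtain c where c: "M *\<^sub>v u k = c \<cdot>\<^sub>v u k" using e k unfolding eigenbasis_def by auto
  have "cinner_vec (u k) (M *\<^sub>v u k) = c"
    using c cinner_vec_smult_right[of "u k" "u k" c] onb_cinner_vec[OF u k k] onb_carrier[OF u k] by simp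
  then show ?thesis using c by simp
qed

section \<open>Spectral theorem for Hermitian matrices\<close>

lemma eigenvector_nonzero_eigenvalue_exists:
  assumes B: "B \<in> carrier_mat d d" and tr: "mtrace B \<noteq> 0"
  shows "\<exists>z c. z \<in> carrier_vec d \<and> z \<noteq> 0\<^sub>v d \<and> B *\<^sub>v z = c \<cdot>\<^sub>v z \<and> c \<noteq> 0"
proof -
  obtain es where es: "char_poly B = (\<Prod>a\<leftarrow>es. [:-a, 1:])"
    using char_poly_factorized[OF B] by blast
  define T where "T = schur_upper_triangular B es"
  have T: "T \<in> carrier_mat d d" "upper_triangular T" "similar_mat B T"
    using schur_upper_triangular[OF B es] unfolding T_def by auto
  have "mtrace T \<noteq> 0" using mtrace_similar[OF T(3) B] tr by simp
  then obtain r where r: "r < d" "T $$ (r, r) \<noteq> 0"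
    using T(1) unfolding mtrace_def by (metis (no_types, lifting) carrier_matD(1) lessThan_iff sum.neutral)
  have "char_poly B = (\<Prod>a\<leftarrow>diag_mat T. [:-a, 1:])"
    using char_poly_similar[OF T(3)] char_poly_upper_triangular[OF T(1,2)] by simp
  moreover have "T $$ (r, r) \<in> set (diag_mat T)" using r T(1) by (auto simp: diag_mat_def)
  ultimately have "poly (char_poly B) (T $$ (r, r)) = 0"
    by (auto simp: poly_prod_list prod_list_zero_iff)
  then have "eigenvalue B (T $$ (r, r))" using eigenvalue_root_char_poly[OF B] by simp
  then obtain z where "eigenvector B z (T $$ (r, r))" unfolding eigenvalue_def by blast
  then show ?thesis using B r unfolding eigenvector_def by auto
qed

definition orthonormal :: "nat \<Rightarrow> nat \<Rightarrow> (nat \<Rightarrow> complex vec) \<Rightarrow> bool" where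
  "orthonormal d k w \<longleftrightarrow> (\<forall>i<k. w i \<in> carrier_vec d) \<and>
     (\<forall>i<k. \<forall>j<k. cinner_vec (w i) (w j) = (if i = j then 1 else 0))"

lemma onb_iff_orthonormal: "onb d w \<longleftrightarrow> orthonormal d d w"
proof -
  have "cinner_vec (w k) (w l) = (\<Sum>i<d. cnj (w k $ i) * w l $ i)" if "w k \<in> carrier_vec d" for k l
    using that by (simp add: cinner_vec_def)
  then show ?thesis unfolding onb_def orthonormal_def by auto
qed

definition orth_compl_proj :: "nat \<Rightarrow> nat \<Rightarrow> (nat \<Rightarrow> complex vec) \<Rightarrow> complex mat" where
  "orth_compl_proj d k w = mat d d (\<lambda>(r, s). (if r = s then 1 else 0) - (\<Sum>i<k. w i $ r * cnj (w i $ s)))"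

lemma orth_compl_proj_carrier [simp]: "orth_compl_proj d k w \<in> carrier_mat d d"
  by (simp add: orth_compl_proj_def)

context
  fixes d k w assumes w: "orthonormal d k w"
begin

private lemma w_dim [simp]: "i < k \<Longrightarrow> dim_vec (w i) = d"
  using w unfolding orthonormal_def by auto

private lemma w_cinner_vec: "i < k \<Longrightarrow> j < k \<Longrightarrow> cinner_vec (w i) (w j) = (if i = j then 1 else 0)"
  using w unfolding orthonormal_def by auto

lemma index_orth_compl_proj_mult_vec:
  assumes y: "y \<in> carrier_vec d" and r: "r < d"
  shows "(orth_compl_proj d k w *\<^sub>v y) $ r = y $ r - (\<Sum>i<k. cinner_vec (w i) y * w i $ r)"
proof -
  have "(orth_compl_proj d k w *\<^sub>v y) $ r =
        y $ r - (\<Sum>s<d. \<Sum>i<k. w i $ r * cnj (w i $ s) * y $ s)"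
    using index_mult_mat_vec_sum[OF orth_compl_proj_carrier y r] r
    by (simp add: orth_compl_proj_def left_diff_distrib sum_subtractf sum_distrib_right mult_if_0)
  also have "(\<Sum>s<d. \<Sum>i<k. w i $ r * cnj (w i $ s) * y $ s) = (\<Sum>i<k. (\<Sum>s<d. cnj (w i $ s) * y $ s) * w i $ r)"
    by (subst sum.swap) (simp add: sum_distrib_left sum_distrib_right mult_ac)
  also have "\<dots> = (\<Sum>i<k. cinner_vec (w i) y * w i $ r)"
    by (simp add: cinner_vec_def)
  finally show ?thesis .
qed

lemma cinner_vec_orth_compl_proj:
  assumes y: "y \<in> carrier_vec d" and j: "j < k"
  shows "cinner_vec (w j) (orth_compl_proj d k w *\<^sub>v y) = 0"
proof -
  have "cinner_vec (w j) (orth_compl_proj d k w *\<^sub>v y) =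
        (\<Sum>r<d. cnj (w j $ r) * (y $ r - (\<Sum>i<k. cinner_vec (w i) y * w i $ r)))"
    using j by (simp add: cinner_vec_def index_orth_compl_proj_mult_vec[OF y])
  also have "\<dots> = cinner_vec (w j) y - (\<Sum>i<k. cinner_vec (w i) y * (\<Sum>r<d. cnj (w j $ r) * w i $ r))"
    using j by (simp add: cinner_vec_def right_diff_distrib sum_subtractf sum_distrib_left
        sum.swap[of _ "{..<d}" "{..<k}"] mult_ac)
  also have "\<dots> = cinner_vec (w j) y - (\<Sum>i<k. cinner_vec (w i) y * cinner_vec (w j) (w i))"
    using j by (simp add: cinner_vec_def)
  also have "\<dots> = 0"
    using j by (simp add: w_cinner_vec mult_if_0 cong: if_cong)
  finally show ?thesis .
qed

lemma orth_compl_proj_fixes_orthogonal: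
  assumes y: "y \<in> carrier_vec d" and orth: "\<forall>j<k. cinner_vec (w j) y = 0"
  shows "orth_compl_proj d k w *\<^sub>v y = y"
  by (rule eq_vecI) (use y orth index_orth_compl_proj_mult_vec[OF y] in \<open>auto simp: orth_compl_proj_def\<close>)

lemma mtrace_orth_compl_proj: "k \<le> d \<Longrightarrow> mtrace (orth_compl_proj d k w) = of_nat (d - k)"
proof -
  assume "k \<le> d"
  have "mtrace (orth_compl_proj d k w) = of_nat d - (\<Sum>i<k. \<Sum>r<d. cnj (w i $ r) * w i $ r)"
    by (simp add: mtrace_def orth_compl_proj_def sum_subtractf sum.swap[of _ "{..<d}" "{..<k}"] mult.commute)
  also have "(\<Sum>i<k. \<Sum>r<d. cnj (w i $ r) * w i $ r) = (\<Sum>i<k. cinner_vec (w i) (w i))"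
    by (simp add: cinner_vec_def)
  also have "\<dots> = of_nat k"
    by (simp add: w_cinner_vec)
  finally show ?thesis using \<open>k \<le> d\<close> by (simp add: of_nat_diff)
qed

end

lemma cinner_vec_self_pos:
  assumes z: "z \<in> carrier_vec d" "z \<noteq> 0\<^sub>v d"
  shows "(\<Sum>i<d. (cmod (z $ i))\<^sup>2) > 0"
proof -
  obtain i where "i < d" "z $ i \<noteq> 0" using z by (metis carrier_vecD eq_vecI index_zero_vec)
  then show ?thesis by (intro sum_pos2[of _ i]) auto
qed

lemma normalized_multiple_exists:
  assumes z: "z \<in> carrier_vec d" "z \<noteq> 0\<^sub>v d"
  shows "\<exists>s. cinner_vec (s \<cdot>\<^sub>v z) (s \<cdot>\<^sub>v z) = 1"
proof -
  define N where "N = (\<Sum>i<d. (cmod (z $ i))\<^sup>2)"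
  have N: "N > 0" using cinner_vec_self_pos[OF z] by (simp add: N_def)
  define s where "s = complex_of_real (1 / sqrt N)"
  have zz: "cinner_vec z z = complex_of_real N" using cinner_vec_self[OF z(1)] by (simp add: N_def)
  have "cinner_vec (s \<cdot>\<^sub>v z) (s \<cdot>\<^sub>v z) = cnj s * (s * cinner_vec z z)"
    using z by (simp add: cinner_vec_smult_left cinner_vec_smult_right)
  also have "\<dots> = complex_of_real ((1 / sqrt N) * ((1 / sqrt N) * N))"
    unfolding s_def zz of_real_mult by simp
  also have "(1 / sqrt N) * ((1 / sqrt N) * N) = 1" using N by (simp add: field_simps)
  finally show ?thesis by auto
qed

lemma hermitian_preserves_orthogonality_to_eigenvector:
  assumes A: "A \<in> carrier_mat d d" "adj A = A" and w: "w \<in> carrier_vec d" and z: "z \<in> carrier_vec d"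
    and eig: "A *\<^sub>v w = \<mu> \<cdot>\<^sub>v w" and orth: "cinner_vec w z = 0"
  shows "cinner_vec w (A *\<^sub>v z) = 0"
  using cinner_vec_hermitian[OF A w z] eig orth by (simp add: cinner_vec_smult_left)

lemma shifted_compression_mult_vec:
  assumes P: "P \<in> carrier_mat d d" and A: "A \<in> carrier_mat d d" and z: "z \<in> carrier_vec d"
  shows "(P * A * P + c \<cdot>\<^sub>m P) *\<^sub>v z = P *\<^sub>v (A *\<^sub>v (P *\<^sub>v z)) + c \<cdot>\<^sub>v (P *\<^sub>v z)"
proof -
  have "(P * A * P + c \<cdot>\<^sub>m P) *\<^sub>v z = (P * A * P) *\<^sub>v z + (c \<cdot>\<^sub>m P) *\<^sub>v z"
    by (rule add_mult_distrib_mat_vec) (use P A z in auto)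
  also have "(P * A * P) *\<^sub>v z = P *\<^sub>v (A *\<^sub>v (P *\<^sub>v z))"
    using assoc_mult_mat_vec[OF mult_carrier_mat[OF P A] P z] assoc_mult_mat_vec[OF P A mult_mat_vec_carrier[OF P z]]
    by simp
  finally show ?thesis by (simp add: smult_mat_mult_vec[OF P z])
qed

lemma eigenvector_of_shift:
  fixes A :: "complex mat"
  assumes A: "A \<in> carrier_mat d d" and z: "z \<in> carrier_vec d" and eq: "A *\<^sub>v z + c \<cdot>\<^sub>v z = b \<cdot>\<^sub>v z"
  shows "A *\<^sub>v z = (b - c) \<cdot>\<^sub>v z"
proof (rule eq_vecI)
  fix r assume "r < dim_vec ((b - c) \<cdot>\<^sub>v z)"
  then have r: "r < d" using z by simp
  have "(A *\<^sub>v z) $ r + c * z $ r = b * z $ r"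
    using arg_cong[OF eq, of "\<lambda>v. v $ r"] r A z by simp
  then have "(A *\<^sub>v z) $ r = b * z $ r - c * z $ r" by (simp add: eq_diff_eq)
  then show "(A *\<^sub>v z) $ r = ((b - c) \<cdot>\<^sub>v z) $ r"
    using r z by (simp add: left_diff_distrib)
qed (use A z in simp)

lemma hermitian_orthogonal_eigenvector_exists:
  assumes A: "A \<in> carrier_mat d d" "adj A = A" and k: "k < d" and w: "orthonormal d k w"
    and eig: "\<forall>i<k. A *\<^sub>v w i = \<mu> i \<cdot>\<^sub>v w i"
  shows "\<exists>z c. z \<in> carrier_vec d \<and> z \<noteq> 0\<^sub>v d \<and> (\<forall>i<k. cinner_vec (w i) z = 0) \<and> A *\<^sub>v z = c \<cdot>\<^sub>v z"
proof -
  let ?P = "orth_compl_proj d k w"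
  have wc: "\<And>i. i < k \<Longrightarrow> w i \<in> carrier_vec d" using w unfolding orthonormal_def by auto
  \<comment> \<open>Shifting by a multiple of the projector normalises the trace to 1, which forces a nonzero
    eigenvalue, and eigenvectors for a nonzero eigenvalue lie in the range of the projector.\<close>
  define c where "c = (1 - mtrace (?P * A * ?P)) / of_nat (d - k)"
  define B where "B = ?P * A * ?P + c \<cdot>\<^sub>m ?P"
  have B: "B \<in> carrier_mat d d" using A by (simp add: B_def)
  have PAP: "?P * A * ?P \<in> carrier_mat d d" by (metis A(1) mult_carrier_mat orth_compl_proj_carrier)
  have "mtrace B = mtrace (?P * A * ?P) + c * of_nat (d - k)"
    using mtrace_add[OF PAP, of "c \<cdot>\<^sub>m ?P"] mtrace_smult[OF orth_compl_proj_carrier]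
      mtrace_orth_compl_proj[OF w] k by (simp add: B_def)
  also have "\<dots> = 1" using k by (simp add: c_def)
  finally obtain z b where z: "z \<in> carrier_vec d" "z \<noteq> 0\<^sub>v d" and Bz: "B *\<^sub>v z = b \<cdot>\<^sub>v z" and b: "b \<noteq> 0"
    using eigenvector_nonzero_eigenvalue_exists[OF B] by (metis one_neq_zero)
  have B_mult: "B *\<^sub>v z = ?P *\<^sub>v (A *\<^sub>v (?P *\<^sub>v z)) + c \<cdot>\<^sub>v (?P *\<^sub>v z)"
    unfolding B_def by (rule shifted_compression_mult_vec[OF orth_compl_proj_carrier A(1) z(1)])
  have carriers: "?P *\<^sub>v z \<in> carrier_vec d" "A *\<^sub>v (?P *\<^sub>v z) \<in> carrier_vec d"
    "?P *\<^sub>v (A *\<^sub>v (?P *\<^sub>v z)) \<in> carrier_vec d"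
    using A(1) z(1) by (auto intro!: mult_mat_vec_carrier[OF orth_compl_proj_carrier] mult_mat_vec_carrier)
  have orth: "\<forall>j<k. cinner_vec (w j) z = 0"
  proof (intro allI impI)
    fix j assume j: "j < k"
    have "b * cinner_vec (w j) z = cinner_vec (w j) (B *\<^sub>v z)"
      using Bz z wc[OF j] by (simp add: cinner_vec_smult_right)
    also have "\<dots> = cinner_vec (w j) (?P *\<^sub>v (A *\<^sub>v (?P *\<^sub>v z))) + c * cinner_vec (w j) (?P *\<^sub>v z)"
      unfolding B_mult using wc[OF j] carriers by (simp add: cinner_vec_add_right[of _ d] cinner_vec_smult_right)
    also have "\<dots> = 0"
      using carriers z by (simp add: cinner_vec_orth_compl_proj[OF w _ j])
    finally show "cinner_vec (w j) z = 0" using b by simp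
  qed
  have "\<forall>j<k. cinner_vec (w j) (A *\<^sub>v z) = 0"
    using hermitian_preserves_orthogonality_to_eigenvector[OF A wc z(1)] eig orth by blast
  then have "A *\<^sub>v z + c \<cdot>\<^sub>v z = b \<cdot>\<^sub>v z"
    using B_mult Bz A z by (simp add: orth_compl_proj_fixes_orthogonal[OF w] orth)
  then have "A *\<^sub>v z = (b - c) \<cdot>\<^sub>v z" by (rule eigenvector_of_shift[OF A(1) z(1)])
  then show ?thesis using z orth by blast
qed

lemma hermitian_orthonormal_eigenvectors_exist:
  assumes A: "A \<in> carrier_mat d d" "adj A = A"
  shows "k \<le> d \<Longrightarrow> \<exists>w \<mu>. orthonormal d k w \<and> (\<forall>i<k. A *\<^sub>v w i = \<mu> i \<cdot>\<^sub>v w i)"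
proof (induction k)
  case (Suc k)
  then obtain w \<mu> where w: "orthonormal d k w" and eig: "\<forall>i<k. A *\<^sub>v w i = \<mu> i \<cdot>\<^sub>v w i" by auto
  obtain z c where z: "z \<in> carrier_vec d" "z \<noteq> 0\<^sub>v d" and orth: "\<forall>i<k. cinner_vec (w i) z = 0"
    and Az: "A *\<^sub>v z = c \<cdot>\<^sub>v z"
    using hermitian_orthogonal_eigenvector_exists[OF A _ w eig] Suc.prems by auto
  obtain s where s: "cinner_vec (s \<cdot>\<^sub>v z) (s \<cdot>\<^sub>v z) = 1" using normalized_multiple_exists[OF z] by blast
  have wc: "\<And>i. i < k \<Longrightarrow> w i \<in> carrier_vec d" using w unfolding orthonormal_def by auto
  have orth': "cinner_vec (w i) (s \<cdot>\<^sub>v z) = 0" "cinner_vec (s \<cdot>\<^sub>v z) (w i) = 0" if "i < k" for i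
    using orth that wc[OF that] z cinner_vec_commute_cnj[of "s \<cdot>\<^sub>v z" d "w i"]
    by (simp_all add: cinner_vec_smult_right cinner_vec_smult_left)
  define w' where "w' = w(k := s \<cdot>\<^sub>v z)"
  define \<mu>' where "\<mu>' = \<mu>(k := c)"
  have "orthonormal d (Suc k) w'"
    using w z s orth' unfolding orthonormal_def w'_def by (auto simp: less_Suc_eq)
  moreover have "A *\<^sub>v (s \<cdot>\<^sub>v z) = c \<cdot>\<^sub>v (s \<cdot>\<^sub>v z)"
    using A z Az by (simp add: mult_mat_vec smult_smult_assoc mult.commute)
  then have "\<forall>i<Suc k. A *\<^sub>v w' i = \<mu>' i \<cdot>\<^sub>v w' i"
    using eig by (auto simp: w'_def \<mu>'_def less_Suc_eq)
  ultimately show ?case by blast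
qed (simp add: orthonormal_def)

lemma hermitian_eigenbasis_exists:
  "A \<in> carrier_mat d d \<Longrightarrow> adj A = A \<Longrightarrow> \<exists>w \<mu>. onb d w \<and> (\<forall>k<d. A *\<^sub>v w k = \<mu> k \<cdot>\<^sub>v w k)"
  using hermitian_orthonormal_eigenvectors_exist[of A d d] by (simp add: onb_iff_orthonormal)

section \<open>Von Neumann entropy\<close>

lemma char_poly_eigenbasis:
  assumes A: "A \<in> carrier_mat d d" and w: "onb d w"
    and eig: "\<And>k. k < d \<Longrightarrow> A *\<^sub>v w k = \<mu> k \<cdot>\<^sub>v w k"
  shows "char_poly A = (\<Prod>a\<leftarrow>map \<mu> [0..<d]. [:-a, 1:])"
proof -
  let ?U = "basis_mat d w"
  define D where "D = mat d d (\<lambda>(i, j). if i = j then \<mu> i else 0)"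
  have D: "D \<in> carrier_mat d d" by (simp add: D_def)
  have AU: "A * ?U = ?U * D"
  proof (rule eq_matI)
    fix i j assume "i < dim_row (?U * D)" "j < dim_col (?U * D)"
    then have i: "i < d" and j: "j < d" using D by (auto simp: basis_mat_def)
    have "(A * ?U) $$ (i, j) = (\<Sum>k<d. A $$ (i, k) * w j $ k)"
      unfolding index_mult_mat_sum[OF A basis_mat_carrier i j] using j
      by (auto simp: basis_mat_def intro!: sum.cong)
    also have "\<dots> = \<mu> j * w j $ i"
      using index_mult_mat_vec_sum[OF A onb_carrier[OF w j] i] eig[OF j] onb_carrier[OF w j] i by simp
    also have "\<dots> = (?U * D) $$ (i, j)"
      unfolding index_mult_mat_sum[OF basis_mat_carrier D i j] using i j
      by (simp add: basis_mat_def D_def mult_if_0 cong: if_cong)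
    finally show "(A * ?U) $$ (i, j) = (?U * D) $$ (i, j)" .
  qed (use A D in auto)
  have "A = ?U * D * adj ?U"
    using A AU onb_basis_mat_unitary(2)[OF w]
    by (metis adj_basis_mat_carrier assoc_mult_mat basis_mat_carrier right_mult_one_mat)
  then have "similar_mat A D"
    unfolding similar_mat_def similar_mat_wit_def Let_def
    using A D onb_basis_mat_unitary[OF w] by (intro exI[of _ ?U] exI[of _ "adj ?U"]) auto
  then have "char_poly A = char_poly D" by (rule char_poly_similar)
  also have "\<dots> = (\<Prod>a\<leftarrow>diag_mat D. [:-a, 1:])"
    by (rule char_poly_upper_triangular[OF D]) (auto simp: upper_triangular_def D_def)
  also have "diag_mat D = map \<mu> [0..<d]"
    by (rule nth_equalityI) (auto simp: diag_mat_def D_def)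
  finally show ?thesis .
qed

lemma proots_prod_list_linear: "proots (\<Prod>a\<leftarrow>xs. [:-a, 1:]) = mset (xs :: 'a :: idom list)"
proof (induction xs)
  case (Cons a xs)
  have "(\<Prod>a\<leftarrow>xs. [:-a, 1:]) \<noteq> (0 :: 'a poly)" by (auto simp: prod_list_zero_iff)
  then have "proots ([:-a, 1:] * (\<Prod>a\<leftarrow>xs. [:-a, 1:])) = proots [:-a, 1:] + proots (\<Prod>a\<leftarrow>xs. [:-a, 1:])"
    by (intro proots_mult) auto
  then show ?case using Cons by simp
qed simp

lemma vN_entropy_eigenbasis:
  assumes A: "A \<in> carrier_mat d d" and w: "onb d w"
    and eig: "\<And>k. k < d \<Longrightarrow> A *\<^sub>v w k = \<mu> k \<cdot>\<^sub>v w k"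
  shows "vN_entropy A = - (\<Sum>k<d. Re (\<mu> k) * ln (Re (\<mu> k)))"
proof -
  have "proots (char_poly A) = mset (map \<mu> [0..<d])"
    using char_poly_eigenbasis[OF A w eig] proots_prod_list_linear[of "map \<mu> [0..<d]"]
    by (simp add: o_def)
  then show ?thesis
    by (simp add: vN_entropy_def sum_unfold_sum_mset image_mset.compositionality o_def lessThan_atLeast0)
qed

definition psd :: "nat \<Rightarrow> complex mat \<Rightarrow> bool" where
  "psd d A \<longleftrightarrow> A \<in> carrier_mat d d \<and> adj A = A \<and>
     (\<forall>v \<in> carrier_vec d. Im (qform A v) = 0 \<and> Re (qform A v) \<ge> 0)"

lemma density_imp_psd: "density d R \<Longrightarrow> psd d R"
  unfolding density_def psd_def by auto

lemma psd_carrier: "psd d A \<Longrightarrow> A \<in> carrier_mat d d"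
  unfolding psd_def by auto

lemma psd_qform: "psd d A \<Longrightarrow> v \<in> carrier_vec d \<Longrightarrow> Im (qform A v) = 0 \<and> Re (qform A v) \<ge> 0"
  unfolding psd_def by auto

lemma psd_real_eigenbasis_exists:
  assumes "psd d A"
  shows "\<exists>w e. onb d w \<and> (\<forall>k<d. A *\<^sub>v w k = complex_of_real (e k) \<cdot>\<^sub>v w k) \<and> (\<forall>k<d. e k \<ge> 0)"
proof -
  have A: "A \<in> carrier_mat d d" and h: "adj A = A" using assms unfolding psd_def by auto
  obtain w \<mu> where w: "onb d w" and eig: "\<forall>k<d. A *\<^sub>v w k = \<mu> k \<cdot>\<^sub>v w k"
    using hermitian_eigenbasis_exists[OF A h] by blast
  have \<mu>: "\<mu> k = qform A (w k)" if k: "k < d" for k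
    using qform_eq_cinner_vec[OF A onb_carrier[OF w k]] eig k onb_cinner_vec[OF w k k] onb_carrier[OF w k]
    by (simp add: cinner_vec_smult_right)
  have "\<mu> k = complex_of_real (Re (\<mu> k)) \<and> Re (\<mu> k) \<ge> 0" if "k < d" for k
    using \<mu>[OF that] psd_qform[OF assms onb_carrier[OF w that]] by (simp add: complex_eq_iff)
  then show ?thesis using w eig by (intro exI[of _ w] exI[of _ "\<lambda>k. Re (\<mu> k)"]) metis
qed

lemma mtrace_real_eigenbasis:
  assumes A: "A \<in> carrier_mat d d" and w: "onb d w"
    and eig: "\<forall>k<d. A *\<^sub>v w k = complex_of_real (e k) \<cdot>\<^sub>v w k"
  shows "mtrace A = complex_of_real (\<Sum>k<d. e k)"
  unfolding mtrace_onb[OF w A] of_real_sum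
  using eig onb_cinner_vec[OF w] onb_carrier[OF w] by (intro sum.cong refl) (simp add: cinner_vec_smult_right)

lemma vN_entropy_nonneg:
  assumes p: "psd d A" and tr: "mtrace A = 1"
  shows "vN_entropy A \<ge> 0"
proof -
  obtain w e where w: "onb d w" and eig: "\<forall>k<d. A *\<^sub>v w k = complex_of_real (e k) \<cdot>\<^sub>v w k"
    and e0: "\<forall>k<d. e k \<ge> 0" using psd_real_eigenbasis_exists[OF p] by blast
  have sum1: "(\<Sum>k<d. e k) = 1" using mtrace_real_eigenbasis[OF psd_carrier[OF p] w eig] tr
    by (metis of_real_eq_1_iff)
  have "e k \<le> 1" if "k < d" for k
    using member_le_sum[of k "{..<d}" e] e0 sum1 that by auto
  then have "e k * ln (e k) \<le> 0" if "k < d" for k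
    using e0 that by (cases "e k = 0") (auto intro!: mult_nonneg_nonpos)
  then have "(\<Sum>k<d. e k * ln (e k)) \<le> 0" by (intro sum_nonpos) auto
  then show ?thesis
    using vN_entropy_eigenbasis[OF psd_carrier[OF p] w, of "\<lambda>k. of_real (e k)"] eig by simp
qed

lemma xlnx_weighted_mean_le:
  fixes b x :: "nat \<Rightarrow> real"
  assumes I: "finite I" and b: "\<And>i. i \<in> I \<Longrightarrow> b i \<ge> 0" and bs: "(\<Sum>i\<in>I. b i) = 1"
    and x: "\<And>i. i \<in> I \<Longrightarrow> x i \<ge> 0"
  shows "(\<Sum>i\<in>I. b i * x i) * ln (\<Sum>i\<in>I. b i * x i) \<le> (\<Sum>i\<in>I. b i * (x i * ln (x i)))"
proof -
  define t where "t = (\<Sum>i\<in>I. b i * x i)"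
  have t0: "t \<ge> 0" unfolding t_def using b x by (intro sum_nonneg) auto
  show ?thesis
  proof (cases "t = 0")
    case True
    then have "b i * x i = 0" if "i \<in> I" for i
      using sum_nonneg_eq_0_iff[OF I, of "\<lambda>i. b i * x i"] b x that unfolding t_def by auto
    then have "(\<Sum>i\<in>I. b i * (x i * ln (x i))) = 0" by (intro sum.neutral) auto
    then show ?thesis using True unfolding t_def by simp
  next
    case False
    then have tp: "t > 0" using t0 by simp
    have tangent: "x i * ln (x i) \<ge> x i * ln t + x i - t" if "i \<in> I" for i
    proof (cases "x i = 0")
      case False
      then have xp: "x i > 0" using x[OF that] by simp
      have "x i * ln (t / x i) \<le> x i * (t / x i - 1)"
        using ln_le_minus_one[of "t / x i"] xp tp by (intro mult_left_mono) auto
      moreover have "ln (t / x i) = ln t - ln (x i)" using xp tp by (simp add: ln_div)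
      moreover have "x i * (t / x i - 1) = t - x i" using xp by (simp add: field_simps)
      ultimately show ?thesis by (simp add: algebra_simps)
    qed (use tp in simp)
    have "(\<Sum>i\<in>I. b i * (x i * ln t + x i - t)) =
          (\<Sum>i\<in>I. b i * x i) * ln t + (\<Sum>i\<in>I. b i * x i) - t * (\<Sum>i\<in>I. b i)"
      by (simp add: algebra_simps sum.distrib sum_subtractf sum_distrib_left sum_distrib_right)
    also have "\<dots> = t * ln t" using bs by (simp add: t_def[symmetric])
    finally have "t * ln t = (\<Sum>i\<in>I. b i * (x i * ln t + x i - t))" ..
    also have "\<dots> \<le> (\<Sum>i\<in>I. b i * (x i * ln (x i)))"
      by (intro sum_mono mult_left_mono tangent b)
    finally show ?thesis unfolding t_def .
  qed
qed

lemma cnj_mult_self: "cnj z * z = complex_of_real ((cmod z)\<^sup>2)"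
  using complex_norm_square[of z] by (simp add: mult.commute)

lemma onb_overlaps_sum:
  assumes v: "onb d v" and w: "onb d w" and j: "j < d"
  shows "(\<Sum>k<d. (cmod (cinner_vec (w k) (v j)))\<^sup>2) = 1"
proof -
  have "complex_of_real (\<Sum>k<d. (cmod (cinner_vec (w k) (v j)))\<^sup>2) = cinner_vec (v j) (v j)"
    unfolding of_real_sum cnj_mult_self[symmetric] by (rule parseval[OF w onb_carrier[OF v j]])
  then show ?thesis using onb_cinner_vec[OF v j j] by (metis of_real_eq_1_iff)
qed

lemma vN_entropy_le_diagonal_entropy:
  assumes p: "psd d A" and v: "onb d v"
  shows "vN_entropy A \<le> - (\<Sum>j<d. Re (cinner_vec (v j) (A *\<^sub>v v j)) * ln (Re (cinner_vec (v j) (A *\<^sub>v v j))))"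
proof -
  have A: "A \<in> carrier_mat d d" using psd_carrier[OF p] .
  obtain w e where w: "onb d w" and eig: "\<forall>k<d. A *\<^sub>v w k = complex_of_real (e k) \<cdot>\<^sub>v w k"
    and e0: "\<forall>k<d. e k \<ge> 0" using psd_real_eigenbasis_exists[OF p] by blast
  \<comment> \<open>The overlap matrix B is doubly stochastic and maps the spectrum onto the diagonal.\<close>
  define B where "B j k = (cmod (cinner_vec (w k) (v j)))\<^sup>2" for j k
  define q where "q j = Re (cinner_vec (v j) (A *\<^sub>v v j))" for j
  have q: "q j = (\<Sum>k<d. B j k * e k)" if j: "j < d" for j
  proof -
    have "cinner_vec (v j) (A *\<^sub>v v j) =
          (\<Sum>k<d. complex_of_real (e k) * (cnj (cinner_vec (w k) (v j)) * cinner_vec (w k) (v j)))"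
      using eigenbasis_expansion[OF w A] eig
      by (intro cinner_vec_expansion[OF w A _ onb_carrier[OF v j] onb_carrier[OF v j]]) auto
    then show ?thesis unfolding q_def B_def cnj_mult_self by (simp add: mult.commute)
  qed
  have cols: "(\<Sum>j<d. B j k) = 1" if k: "k < d" for k
  proof -
    have "B j k = (cmod (cinner_vec (v j) (w k)))\<^sup>2" if "j < d" for j
      using cinner_vec_commute_cnj[OF onb_carrier[OF w k] onb_carrier[OF v that]] unfolding B_def by simp
    then show ?thesis using onb_overlaps_sum[OF w v k] by simp
  qed
  have "q j * ln (q j) \<le> (\<Sum>k<d. B j k * (e k * ln (e k)))" if j: "j < d" for j
    unfolding q[OF j] by (rule xlnx_weighted_mean_le) (use onb_overlaps_sum[OF v w j] e0 in \<open>auto simp: B_def\<close>)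
  then have "(\<Sum>j<d. q j * ln (q j)) \<le> (\<Sum>j<d. \<Sum>k<d. B j k * (e k * ln (e k)))"
    by (intro sum_mono) auto
  also have "\<dots> = (\<Sum>k<d. e k * ln (e k))"
    by (subst sum.swap) (simp add: sum_distrib_right[symmetric] cols)
  finally show ?thesis
    using vN_entropy_eigenbasis[OF A w, of "\<lambda>k. of_real (e k)"] eig unfolding q_def by simp
qed

section \<open>Tensor products and partial traces\<close>

definition tens :: "nat \<Rightarrow> nat \<Rightarrow> complex vec \<Rightarrow> complex vec \<Rightarrow> complex vec" where
  "tens m n x y = vec (m * n) (\<lambda>a. x $ (a div n) * y $ (a mod n))"

lemma tens_carrier [simp]: "tens m n x y \<in> carrier_vec (m * n)"
  and dim_tens [simp]: "dim_vec (tens m n x y) = m * n"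
  by (simp_all add: tens_def)

lemma index_tens: "i < m \<Longrightarrow> j < n \<Longrightarrow> tens m n x y $ (i * n + j) = x $ i * y $ j"
  by (simp add: tens_def index_pair_less)

lemma cinner_vec_tens:
  assumes "x \<in> carrier_vec m" "y \<in> carrier_vec n"
  shows "cinner_vec (tens m n x y) (tens m n x' y') = cinner_vec x x' * cinner_vec y y'"
  using assms
  by (simp add: cinner_vec_def sum_lessThan_mult_nat index_tens sum_product mult_ac tens_def[of m n x y])

lemma cinner_vec_tens_expand:
  assumes R: "R \<in> carrier_mat (m * n) (m * n)"
  shows "cinner_vec (tens m n x y) (R *\<^sub>v tens m n x' y') =
    (\<Sum>a<m. \<Sum>l<n. \<Sum>b<m. \<Sum>l'<n. cnj (x $ a) * cnj (y $ l) * R $$ (a * n + l, b * n + l') * x' $ b * y' $ l')"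
  unfolding cinner_vec_mult_mat_vec[OF R tens_carrier tens_carrier]
  by (simp add: sum_lessThan_mult_nat index_tens sum_distrib_left mult_ac)

lemma ptrace_P_carrier [simp]: "ptrace_P m n R \<in> carrier_mat m m"
  and ptrace_C_carrier [simp]: "ptrace_C m n R \<in> carrier_mat n n"
  and dim_ptrace_C [simp]: "dim_row (ptrace_C m n R) = n" "dim_col (ptrace_C m n R) = n"
  by (simp_all add: ptrace_P_def ptrace_C_def)

lemma sum_swap_into2:
  "(\<Sum>j\<in>J. \<Sum>a\<in>A. \<Sum>b\<in>B. f j a b) = (\<Sum>a\<in>A. \<Sum>b\<in>B. \<Sum>j\<in>J. f j a b)"
  by (subst sum.swap, intro sum.cong refl sum.swap)

lemma sum_swap_into4:
  "(\<Sum>j\<in>J. \<Sum>a\<in>A. \<Sum>l\<in>L. \<Sum>b\<in>B. \<Sum>l'\<in>L'. f j a l b l') =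
   (\<Sum>a\<in>A. \<Sum>l\<in>L. \<Sum>b\<in>B. \<Sum>l'\<in>L'. \<Sum>j\<in>J. f j a l b l')"
  by (subst sum.swap, intro sum.cong refl,
      subst sum.swap, intro sum.cong refl,
      subst sum.swap, intro sum.cong refl sum.swap)

lemma cinner_vec_ptrace_P:
  assumes R: "R \<in> carrier_mat (m * n) (m * n)" and v: "onb n v"
    and x: "x \<in> carrier_vec m" and x': "x' \<in> carrier_vec m"
  shows "cinner_vec x (ptrace_P m n R *\<^sub>v x') = (\<Sum>j<n. cinner_vec (tens m n x (v j)) (R *\<^sub>v tens m n x' (v j)))"
proof -
  have "(\<Sum>j<n. cinner_vec (tens m n x (v j)) (R *\<^sub>v tens m n x' (v j))) =
    (\<Sum>a<m. \<Sum>l<n. \<Sum>b<m. \<Sum>l'<n. \<Sum>j<n. cnj (x $ a) * cnj (v j $ l) * R $$ (a * n + l, b * n + l') * x' $ b * v j $ l')"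
    unfolding cinner_vec_tens_expand[OF R] by (rule sum_swap_into4)
  also have "\<dots> = (\<Sum>a<m. \<Sum>l<n. \<Sum>b<m. \<Sum>l'<n. cnj (x $ a) * R $$ (a * n + l, b * n + l') * x' $ b * (if l = l' then 1 else 0))"
  proof (intro sum.cong refl)
    fix a l b l' assume "l \<in> {..<n}" "l' \<in> {..<n}"
    then have "(if l = l' then 1 else 0) = (\<Sum>j<n. cnj (v j $ l) * v j $ l')"
      using onb_completeness_cnj[OF v] by simp
    then show "(\<Sum>j<n. cnj (x $ a) * cnj (v j $ l) * R $$ (a * n + l, b * n + l') * x' $ b * v j $ l') =
      cnj (x $ a) * R $$ (a * n + l, b * n + l') * x' $ b * (if l = l' then 1 else 0)"
      by (simp add: sum_distrib_left mult_ac)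
  qed
  also have "\<dots> = (\<Sum>a<m. \<Sum>b<m. \<Sum>l<n. cnj (x $ a) * R $$ (a * n + l, b * n + l) * x' $ b)"
    by (simp add: mult_if_0 sum.swap[of _ "{..<n}" "{..<m}"] cong: if_cong)
  also have "\<dots> = cinner_vec x (ptrace_P m n R *\<^sub>v x')"
    unfolding cinner_vec_mult_mat_vec[OF ptrace_P_carrier x x']
    by (simp add: ptrace_P_def sum_distrib_left sum_distrib_right mult_ac)
  finally show ?thesis ..
qed

lemma cinner_vec_ptrace_C:
  assumes R: "R \<in> carrier_mat (m * n) (m * n)" and u: "onb m u"
    and y: "y \<in> carrier_vec n" and y': "y' \<in> carrier_vec n"
  shows "cinner_vec y (ptrace_C m n R *\<^sub>v y') = (\<Sum>i<m. cinner_vec (tens m n (u i) y) (R *\<^sub>v tens m n (u i) y'))"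
proof -
  have "(\<Sum>i<m. cinner_vec (tens m n (u i) y) (R *\<^sub>v tens m n (u i) y')) =
    (\<Sum>a<m. \<Sum>l<n. \<Sum>b<m. \<Sum>l'<n. \<Sum>i<m. cnj (u i $ a) * cnj (y $ l) * R $$ (a * n + l, b * n + l') * u i $ b * y' $ l')"
    unfolding cinner_vec_tens_expand[OF R] by (rule sum_swap_into4)
  also have "\<dots> = (\<Sum>a<m. \<Sum>l<n. \<Sum>b<m. \<Sum>l'<n. cnj (y $ l) * R $$ (a * n + l, b * n + l') * y' $ l' * (if a = b then 1 else 0))"
  proof (intro sum.cong refl)
    fix a l b l' assume "a \<in> {..<m}" "b \<in> {..<m}"
    then have "(if a = b then 1 else 0) = (\<Sum>i<m. cnj (u i $ a) * u i $ b)"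
      using onb_completeness_cnj[OF u] by simp
    then show "(\<Sum>i<m. cnj (u i $ a) * cnj (y $ l) * R $$ (a * n + l, b * n + l') * u i $ b * y' $ l') =
      cnj (y $ l) * R $$ (a * n + l, b * n + l') * y' $ l' * (if a = b then 1 else 0)"
      by (simp add: sum_distrib_left mult_ac)
  qed
  also have "\<dots> = (\<Sum>a<m. \<Sum>l<n. \<Sum>l'<n. cnj (y $ l) * R $$ (a * n + l, a * n + l') * y' $ l')"
    by (rule sum.cong[OF refl], rule sum.cong[OF refl], subst sum.swap) (simp add: mult_if_0 cong: if_cong)
  also have "\<dots> = (\<Sum>l<n. \<Sum>l'<n. \<Sum>a<m. cnj (y $ l) * R $$ (a * n + l, a * n + l') * y' $ l')"
    by (subst sum.swap, intro sum.cong refl sum.swap)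
  also have "\<dots> = cinner_vec y (ptrace_C m n R *\<^sub>v y')"
    unfolding cinner_vec_mult_mat_vec[OF ptrace_C_carrier y y']
    by (simp add: ptrace_C_def sum_distrib_left sum_distrib_right mult_ac)
  finally show ?thesis ..
qed

lemma kron_proj_tens:
  assumes x: "x \<in> carrier_vec m" and y: "y \<in> carrier_vec n"
  shows "kron m n (proj x) (proj y) = proj (tens m n x y)"
proof (rule eq_matI)
  fix r c assume "r < dim_row (proj (tens m n x y))" "c < dim_col (proj (tens m n x y))"
  then have r: "r < m * n" and c: "c < m * n" by (auto simp: proj_def)
  show "kron m n (proj x) (proj y) $$ (r, c) = proj (tens m n x y) $$ (r, c)"
    using r c x y div_less_of_less_mult[OF r] div_less_of_less_mult[OF c]
      mod_less_of_less_mult[OF r] mod_less_of_less_mult[OF c]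
    by (simp add: kron_def proj_def tens_def)
qed (auto simp: kron_def proj_def)

lemma proj_sandwich:
  assumes R: "R \<in> carrier_mat d d" and z: "z \<in> carrier_vec d"
  shows "proj z * R * proj z = qform R z \<cdot>\<^sub>m proj z"
proof -
  have P: "proj z \<in> carrier_mat d d" using z by (simp add: proj_def)
  show ?thesis
  proof (rule eq_matI)
    fix r c assume "r < dim_row (qform R z \<cdot>\<^sub>m proj z)" "c < dim_col (qform R z \<cdot>\<^sub>m proj z)"
    then have r: "r < d" and c: "c < d" using z by (auto simp: proj_def)
    have "(proj z * R) $$ (r, t) = z $ r * (\<Sum>s<d. cnj (z $ s) * R $$ (s, t))" if t: "t < d" for t
      using index_mult_mat_sum[OF P R r t] r z by (simp add: proj_def sum_distrib_left mult_ac)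
    then have "(proj z * R * proj z) $$ (r, c) =
               (\<Sum>t<d. z $ r * (\<Sum>s<d. cnj (z $ s) * R $$ (s, t)) * (z $ t * cnj (z $ c)))"
      using index_mult_mat_sum[OF mult_carrier_mat[OF P R] P r c] c z by (simp add: proj_def)
    also have "\<dots> = (\<Sum>s<d. \<Sum>t<d. cnj (z $ s) * R $$ (s, t) * z $ t) * (z $ r * cnj (z $ c))"
      by (subst sum.swap) (simp add: sum_distrib_left sum_distrib_right mult_ac)
    also have "\<dots> = qform R z * (z $ r * cnj (z $ c))"
      using z by (simp add: qform_def)
    finally show "(proj z * R * proj z) $$ (r, c) = (qform R z \<cdot>\<^sub>m proj z) $$ (r, c)"
      using r c z by (simp add: proj_def)
  qed (use z in \<open>auto simp: proj_def\<close>)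
qed

lemma kron_carrier [simp]: "kron m n A B \<in> carrier_mat (m * n) (m * n)"
  by (simp add: kron_def)

lemma index_kron_proj_one_mult:
  assumes R: "R \<in> carrier_mat (m * n) (m * n)" and w: "w \<in> carrier_vec m"
    and a: "a < m" and l: "l < n" and c: "c < m * n"
  shows "(kron m n (proj w) (1\<^sub>m n) * R) $$ (a * n + l, c) = (\<Sum>b<m. w $ a * cnj (w $ b) * R $$ (b * n + l, c))"
proof -
  have "(kron m n (proj w) (1\<^sub>m n) * R) $$ (a * n + l, c) =
        (\<Sum>b<m. \<Sum>l'<n. (w $ a * cnj (w $ b) * (if l = l' then 1 else 0)) * R $$ (b * n + l', c))"
    unfolding index_mult_mat_sum[OF kron_carrier R index_pair_less[OF a l] c] sum_lessThan_mult_nat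
    using a l w by (intro sum.cong refl) (simp add: kron_def index_pair_less proj_def)
  then show ?thesis using l by (simp add: mult_if_0 cong: if_cong)
qed

lemma cinner_vec_ptrace_C_kron_proj:
  assumes R: "R \<in> carrier_mat (m * n) (m * n)" and w: "w \<in> carrier_vec m"
    and y: "y \<in> carrier_vec n" and y': "y' \<in> carrier_vec n"
  shows "cinner_vec y (ptrace_C m n (kron m n (proj w) (1\<^sub>m n) * R) *\<^sub>v y') =
         cinner_vec (tens m n w y) (R *\<^sub>v tens m n w y')"
proof -
  let ?G = "ptrace_C m n (kron m n (proj w) (1\<^sub>m n) * R)"
  have G: "?G $$ (l, l') = (\<Sum>a<m. \<Sum>b<m. w $ a * cnj (w $ b) * R $$ (b * n + l, a * n + l'))"
    if "l < n" "l' < n" for l l'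
    using that index_kron_proj_one_mult[OF R w _ _ index_pair_less] by (simp add: ptrace_C_def)
  have "cinner_vec y (?G *\<^sub>v y') =
        (\<Sum>l<n. \<Sum>l'<n. \<Sum>a<m. \<Sum>b<m. cnj (w $ b) * cnj (y $ l) * R $$ (b * n + l, a * n + l') * w $ a * y' $ l')"
    unfolding cinner_vec_mult_mat_vec[OF ptrace_C_carrier y y']
    by (simp add: G sum_distrib_left sum_distrib_right mult_ac)
  also have "\<dots> = (\<Sum>l<n. \<Sum>a<m. \<Sum>b<m. \<Sum>l'<n. cnj (w $ b) * cnj (y $ l) * R $$ (b * n + l, a * n + l') * w $ a * y' $ l')"
    by (rule sum.cong[OF refl], rule sum_swap_into2)
  also have "\<dots> = (\<Sum>b<m. \<Sum>l<n. \<Sum>a<m. \<Sum>l'<n. cnj (w $ b) * cnj (y $ l) * R $$ (b * n + l, a * n + l') * w $ a * y' $ l')"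
    by (rule sum_swap_into2[symmetric])
  also have "\<dots> = cinner_vec (tens m n w y) (R *\<^sub>v tens m n w y')"
    unfolding cinner_vec_tens_expand[OF R] ..
  finally show ?thesis .
qed

lemma mtrace_ptrace_C: "R \<in> carrier_mat (m * n) (m * n) \<Longrightarrow> mtrace (ptrace_C m n R) = mtrace R"
  by (simp add: mtrace_def ptrace_C_def sum_lessThan_mult_nat sum.swap[of _ "{..<n}" "{..<m}"])

section \<open>The dephasing map\<close>

definition prod_basis :: "nat \<Rightarrow> nat \<Rightarrow> (nat \<Rightarrow> complex vec) \<Rightarrow> (nat \<Rightarrow> complex vec) \<Rightarrow> nat \<Rightarrow> complex vec" where
  "prod_basis m n u v b = tens m n (u (b div n)) (v (b mod n))"

lemma prod_basis_pair: "j < n \<Longrightarrow> prod_basis m n u v (i * n + j) = tens m n (u i) (v j)"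
  by (simp add: prod_basis_def)

lemma onb_prod_basis:
  assumes u: "onb m u" and v: "onb n v"
  shows "onb (m * n) (prod_basis m n u v)"
  unfolding onb_iff_orthonormal orthonormal_def
proof (intro conjI allI impI)
  fix k l assume k: "k < m * n" and l: "l < m * n"
  note idx = div_less_of_less_mult[OF k] div_less_of_less_mult[OF l] mod_less_of_less_mult[OF k] mod_less_of_less_mult[OF l]
  have "cinner_vec (prod_basis m n u v k) (prod_basis m n u v l) =
        cinner_vec (u (k div n)) (u (l div n)) * cinner_vec (v (k mod n)) (v (l mod n))"
    unfolding prod_basis_def using idx by (intro cinner_vec_tens onb_carrier[OF u] onb_carrier[OF v])
  also have "\<dots> = (if k = l then 1 else 0)"
    using onb_cinner_vec[OF u idx(1,2)] onb_cinner_vec[OF v idx(3,4)] by (auto simp: div_mod_decomp) (metis div_mult_mod_eq)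
  finally show "cinner_vec (prod_basis m n u v k) (prod_basis m n u v l) = (if k = l then 1 else 0)" .
qed (simp add: prod_basis_def)

lemma dephase_carrier [simp]: "dephase m n u v R \<in> carrier_mat (m * n) (m * n)"
  by (simp add: dephase_def)

lemma dephase_expansion:
  assumes u: "onb m u" and v: "onb n v" and R: "R \<in> carrier_mat (m * n) (m * n)"
    and r: "r < m * n" and c: "c < m * n"
  shows "dephase m n u v R $$ (r, c) =
    (\<Sum>b<m * n. qform R (prod_basis m n u v b) * prod_basis m n u v b $ r * cnj (prod_basis m n u v b $ c))"
proof -
  have "(kron m n (proj (u i)) (proj (v j)) * R * kron m n (proj (u i)) (proj (v j))) $$ (r, c) =
        qform R (tens m n (u i) (v j)) * tens m n (u i) (v j) $ r * cnj (tens m n (u i) (v j) $ c)"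
    if "i < m" "j < n" for i j
    unfolding kron_proj_tens[OF onb_carrier[OF u that(1)] onb_carrier[OF v that(2)]] proj_sandwich[OF R tens_carrier]
    using r c by (simp add: proj_def)
  then show ?thesis
    using r c by (simp add: dephase_def sum_lessThan_mult_nat prod_basis_pair)
qed

lemma vN_entropy_dephase:
  assumes u: "onb m u" and v: "onb n v" and R: "R \<in> carrier_mat (m * n) (m * n)"
  shows "vN_entropy (dephase m n u v R) =
    - (\<Sum>i<m. \<Sum>j<n. Re (qform R (tens m n (u i) (v j))) * ln (Re (qform R (tens m n (u i) (v j)))))"
proof -
  have "vN_entropy (dephase m n u v R) =
        - (\<Sum>b<m * n. Re (qform R (prod_basis m n u v b)) * ln (Re (qform R (prod_basis m n u v b))))"
    by (rule vN_entropy_eigenbasis[OF dephase_carrier onb_prod_basis[OF u v]])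
      (rule eigenvector_of_expansion[OF onb_prod_basis[OF u v] dephase_carrier dephase_expansion[OF u v R]])
  then show ?thesis by (simp add: sum_lessThan_mult_nat prod_basis_pair)
qed

lemma cinner_vec_tens_dephase:
  assumes u: "onb m u" and v: "onb n v" and R: "R \<in> carrier_mat (m * n) (m * n)"
    and x: "x \<in> carrier_vec m" "x' \<in> carrier_vec m" and y: "y \<in> carrier_vec n" "y' \<in> carrier_vec n"
  shows "cinner_vec (tens m n x y) (dephase m n u v R *\<^sub>v tens m n x' y') =
    (\<Sum>i<m. \<Sum>j<n. qform R (tens m n (u i) (v j)) *
       (cnj (cinner_vec (u i) x * cinner_vec (v j) y) * (cinner_vec (u i) x' * cinner_vec (v j) y')))"
proof -
  have "cinner_vec (tens m n x y) (dephase m n u v R *\<^sub>v tens m n x' y') =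
    (\<Sum>b<m * n. qform R (prod_basis m n u v b) *
       (cnj (cinner_vec (prod_basis m n u v b) (tens m n x y)) * cinner_vec (prod_basis m n u v b) (tens m n x' y')))"
    by (rule cinner_vec_expansion[OF onb_prod_basis[OF u v] dephase_carrier dephase_expansion[OF u v R]
          tens_carrier tens_carrier])
  then show ?thesis
    using onb_carrier[OF u] onb_carrier[OF v]
    by (simp add: sum_lessThan_mult_nat prod_basis_pair cinner_vec_tens)
qed

lemma red_C_dephase:
  assumes u: "eigenbasis m (red_C m n R) u" and v: "onb n v" and R: "R \<in> carrier_mat (m * n) (m * n)"
  shows "red_C m n (dephase m n u v R) = red_C m n R"
proof -
  have uo: "onb m u" using u unfolding eigenbasis_def by auto
  have M: "red_C m n R \<in> carrier_mat m m" by (simp add: red_C_def)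
  define P where "P i j = qform R (tens m n (u i) (v j))" for i j
  have \<gamma>: "cinner_vec (u i) (red_C m n R *\<^sub>v u i) = (\<Sum>j<n. P i j)" if "i < m" for i
    unfolding red_C_def cinner_vec_ptrace_P[OF R v onb_carrier[OF uo that] onb_carrier[OF uo that]] P_def
    using qform_eq_cinner_vec[OF R tens_carrier] by simp
  have eig: "red_C m n R *\<^sub>v u i = (\<Sum>j<n. P i j) \<cdot>\<^sub>v u i" if "i < m" for i
    using eigenbasis_eigenvalue[OF u M that] \<gamma>[OF that] by simp
  show ?thesis
  proof (rule mat_eq_by_cinner_vec[OF _ M])
    fix x x' :: "complex vec" assume x: "x \<in> carrier_vec m" and x': "x' \<in> carrier_vec m"
    have "cinner_vec x (red_C m n (dephase m n u v R) *\<^sub>v x') =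
      (\<Sum>l<n. \<Sum>i<m. \<Sum>j<n. P i j * (cnj (cinner_vec (u i) x * cinner_vec (v j) (v l)) *
         (cinner_vec (u i) x' * cinner_vec (v j) (v l))))"
      unfolding red_C_def cinner_vec_ptrace_P[OF dephase_carrier v x x'] P_def
      using cinner_vec_tens_dephase[OF uo v R x x' onb_carrier[OF v] onb_carrier[OF v]] by simp
    also have "\<dots> = (\<Sum>l<n. \<Sum>i<m. P i l * (cnj (cinner_vec (u i) x) * cinner_vec (u i) x'))"
      using onb_cinner_vec[OF v] by (simp add: mult_if_0 if_distrib[of cnj] cong: if_cong)
    also have "\<dots> = (\<Sum>i<m. (\<Sum>j<n. P i j) * (cnj (cinner_vec (u i) x) * cinner_vec (u i) x'))"
      by (subst sum.swap) (simp add: sum_distrib_right)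
    also have "\<dots> = cinner_vec x (red_C m n R *\<^sub>v x')"
      by (rule cinner_vec_expansion[OF uo M eigenbasis_expansion[OF uo M eig] x x', symmetric])
    finally show "cinner_vec x (red_C m n (dephase m n u v R) *\<^sub>v x') = cinner_vec x (red_C m n R *\<^sub>v x')" .
  qed (simp add: red_C_def)
qed

lemma red_P_dephase:
  assumes u: "onb m u" and v: "eigenbasis n (red_P m n R) v" and R: "R \<in> carrier_mat (m * n) (m * n)"
  shows "red_P m n (dephase m n u v R) = red_P m n R"
proof -
  have vo: "onb n v" using v unfolding eigenbasis_def by auto
  have M: "red_P m n R \<in> carrier_mat n n" by (simp add: red_P_def)
  define P where "P i j = qform R (tens m n (u i) (v j))" for i j
  have \<gamma>: "cinner_vec (v j) (red_P m n R *\<^sub>v v j) = (\<Sum>i<m. P i j)" if "j < n" for j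
    unfolding red_P_def cinner_vec_ptrace_C[OF R u onb_carrier[OF vo that] onb_carrier[OF vo that]] P_def
    using qform_eq_cinner_vec[OF R tens_carrier] by simp
  have eig: "red_P m n R *\<^sub>v v j = (\<Sum>i<m. P i j) \<cdot>\<^sub>v v j" if "j < n" for j
    using eigenbasis_eigenvalue[OF v M that] \<gamma>[OF that] by simp
  show ?thesis
  proof (rule mat_eq_by_cinner_vec[OF _ M])
    fix y y' :: "complex vec" assume y: "y \<in> carrier_vec n" and y': "y' \<in> carrier_vec n"
    have "cinner_vec y (red_P m n (dephase m n u v R) *\<^sub>v y') =
      (\<Sum>l<m. \<Sum>i<m. \<Sum>j<n. P i j * (cnj (cinner_vec (u i) (u l) * cinner_vec (v j) y) *
         (cinner_vec (u i) (u l) * cinner_vec (v j) y')))"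
      unfolding red_P_def cinner_vec_ptrace_C[OF dephase_carrier u y y'] P_def
      using cinner_vec_tens_dephase[OF u vo R onb_carrier[OF u] onb_carrier[OF u] y y'] by simp
    also have "\<dots> = (\<Sum>l<m. \<Sum>j<n. P l j * (cnj (cinner_vec (v j) y) * cinner_vec (v j) y'))"
      by (rule sum.cong[OF refl], subst sum.swap)
        (simp add: onb_cinner_vec[OF u] mult_if_0 if_distrib[of cnj] cong: if_cong)
    also have "\<dots> = (\<Sum>j<n. (\<Sum>i<m. P i j) * (cnj (cinner_vec (v j) y) * cinner_vec (v j) y'))"
      by (subst sum.swap) (simp add: sum_distrib_right)
    also have "\<dots> = cinner_vec y (red_P m n R *\<^sub>v y')"
      by (rule cinner_vec_expansion[OF vo M eigenbasis_expansion[OF vo M eig] y y', symmetric])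
    finally show "cinner_vec y (red_P m n (dephase m n u v R) *\<^sub>v y') = cinner_vec y (red_P m n R *\<^sub>v y')" .
  qed (simp add: red_P_def)
qed

section \<open>Measurements on the subsystem C\<close>

lemma mtrace_kron_proj_one_mult:
  assumes R: "R \<in> carrier_mat (m * n) (m * n)" and v: "onb n v" and w: "w \<in> carrier_vec m"
  shows "mtrace (kron m n (proj w) (1\<^sub>m n) * R) = (\<Sum>l<n. qform R (tens m n w (v l)))"
  using mtrace_ptrace_C[OF mult_carrier_mat[OF kron_carrier R]]
    mtrace_onb[OF v ptrace_C_carrier, of m "kron m n (proj w) (1\<^sub>m n) * R"]
    cinner_vec_ptrace_C_kron_proj[OF R w onb_carrier[OF v] onb_carrier[OF v]] qform_eq_cinner_vec[OF R tens_carrier]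
  by simp

lemma meas_prob_eq:
  assumes p: "psd (m * n) R" and v: "onb n v" and w: "onb m w" and j: "j < m"
  shows "meas_prob m n w R j = (\<Sum>l<n. Re (qform R (tens m n (w j) (v l))))"
    and "mtrace (kron m n (proj (w j)) (1\<^sub>m n) * R) = complex_of_real (meas_prob m n w R j)"
proof -
  have "Im (qform R (tens m n (w j) (v l))) = 0" for l
    using psd_qform[OF p tens_carrier] by simp
  then show "meas_prob m n w R j = (\<Sum>l<n. Re (qform R (tens m n (w j) (v l))))"
    and "mtrace (kron m n (proj (w j)) (1\<^sub>m n) * R) = complex_of_real (meas_prob m n w R j)"
    unfolding meas_prob_def mtrace_kron_proj_one_mult[OF psd_carrier[OF p] v onb_carrier[OF w j]]
    by (simp_all add: complex_eq_iff Re_sum Im_sum)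
qed

lemma psd_smult_ptrace_C_kron_proj:
  assumes p: "psd (m * n) R" and w: "w \<in> carrier_vec m" and c: "c \<ge> 0"
  shows "psd n (complex_of_real c \<cdot>\<^sub>m ptrace_C m n (kron m n (proj w) (1\<^sub>m n) * R))"
proof -
  have R: "R \<in> carrier_mat (m * n) (m * n)" and h: "adj R = R" using p unfolding psd_def by auto
  let ?G = "ptrace_C m n (kron m n (proj w) (1\<^sub>m n) * R)"
  let ?S = "complex_of_real c \<cdot>\<^sub>m ?G"
  let ?e = "\<lambda>l. tens m n w (unit_vec n l)"
  have G: "?G $$ (l, l') = cinner_vec (?e l) (R *\<^sub>v ?e l')" if "l < n" "l' < n" for l l'
    using cinner_vec_unit_vec[OF ptrace_C_carrier that, symmetric]
      cinner_vec_ptrace_C_kron_proj[OF R w unit_vec_carrier unit_vec_carrier] by (rule trans)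
  have herm: "?G $$ (l, l') = cnj (?G $$ (l', l))" if "l < n" "l' < n" for l l'
  proof -
    have "?G $$ (l, l') = cinner_vec (R *\<^sub>v ?e l) (?e l')"
      unfolding G[OF that] by (rule cinner_vec_hermitian[OF R h tens_carrier tens_carrier])
    also have "\<dots> = cnj (?G $$ (l', l))"
      unfolding G[OF that(2,1)] by (rule cinner_vec_commute_cnj[OF mult_mat_vec_carrier[OF R tens_carrier] tens_carrier])
    finally show ?thesis .
  qed
  have "adj ?S = ?S"
  proof (rule eq_matI)
    fix l l' assume "l < dim_row ?S" "l' < dim_col ?S"
    then show "adj ?S $$ (l, l') = ?S $$ (l, l')" using herm[of l' l] by (simp add: adj_def)
  qed (simp_all add: adj_def)
  moreover have "qform ?S y = complex_of_real c * qform R (tens m n w y)" if y: "y \<in> carrier_vec n" for y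
    using qform_eq_cinner_vec[OF _ y, of ?S] smult_mat_mult_vec[OF ptrace_C_carrier y]
      cinner_vec_ptrace_C_kron_proj[OF R w y y] qform_eq_cinner_vec[OF R tens_carrier] y
      mult_mat_vec_carrier[OF ptrace_C_carrier y, of m "kron m n (proj w) (1\<^sub>m n) * R"]
    by (simp add: cinner_vec_smult_right carrier_vecD)
  ultimately show ?thesis
    unfolding psd_def using psd_qform[OF p tens_carrier] c by auto
qed

lemma cond_state_eq:
  "cond_state m n w R j =
   complex_of_real (1 / meas_prob m n w R j) \<cdot>\<^sub>m ptrace_C m n (kron m n (proj (w j)) (1\<^sub>m n) * R)"
  unfolding cond_state_def by (simp add: of_real_divide)

lemma cond_state_density:
  assumes p: "psd (m * n) R" and w: "onb m w" and j: "j < m"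
    and pos: "meas_prob m n w R j > 0"
  shows "psd n (cond_state m n w R j)" and "mtrace (cond_state m n w R j) = 1"
proof -
  show "psd n (cond_state m n w R j)" unfolding cond_state_eq
    by (rule psd_smult_ptrace_C_kron_proj[OF p onb_carrier[OF w j]]) (use pos in simp)
  show "mtrace (cond_state m n w R j) = 1"
    unfolding cond_state_eq mtrace_smult[OF ptrace_C_carrier]
      mtrace_ptrace_C[OF mult_carrier_mat[OF kron_carrier psd_carrier[OF p]]] meas_prob_eq(2)[OF p onb_unit_vec w j]
    using pos by simp
qed

lemma meas_cond_entropy_nonneg:
  assumes p: "psd (m * n) R" and w: "onb m w"
  shows "meas_cond_entropy m n w R \<ge> 0"
  unfolding meas_cond_entropy_def
  using vN_entropy_nonneg[OF cond_state_density[OF p w]]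
  by (intro sum_nonneg) auto

section \<open>Discord and measurement-induced disturbance\<close>

lemma entropy_chain_bound:
  fixes p :: "nat \<Rightarrow> nat \<Rightarrow> real" and S c :: "nat \<Rightarrow> real"
  assumes p0: "\<And>i l. p i l \<ge> 0" and c: "\<And>i. c i = (\<Sum>l<n. p i l)"
    and S: "\<And>i. i < m \<Longrightarrow> c i > 0 \<Longrightarrow> S i \<le> - (\<Sum>l<n. (p i l / c i) * ln (p i l / c i))"
  shows "(\<Sum>i\<in>{i. i < m \<and> c i > 0}. c i * S i) \<le>
         - (\<Sum>i<m. \<Sum>l<n. p i l * ln (p i l)) + (\<Sum>i<m. c i * ln (c i))"
proof -
  define T where "T i = - (\<Sum>l<n. p i l * ln (p i l)) + c i * ln (c i)" for i
  have c0: "c i \<ge> 0" for i unfolding c using p0 by (intro sum_nonneg) auto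
  have le: "c i * S i \<le> T i" if i: "i < m" and cp: "c i > 0" for i
  proof -
    have "p i l * ln (p i l / c i) = p i l * ln (p i l) - p i l * ln (c i)" for l
      using p0[of i l] cp by (cases "p i l = 0") (auto simp: ln_div right_diff_distrib)
    then have "c i * (- (\<Sum>l<n. (p i l / c i) * ln (p i l / c i))) =
               - (\<Sum>l<n. p i l * ln (p i l) - p i l * ln (c i))"
      using cp by (simp add: sum_distrib_left)
    also have "\<dots> = T i" unfolding T_def c by (simp add: sum_subtractf sum_distrib_right)
    finally show ?thesis using mult_left_mono[OF S[OF i cp], of "c i"] cp by simp
  qed
  have T0: "T i = 0" if "c i = 0" for i
  proof -
    have "p i l = 0" if "l < n" for l
      using \<open>c i = 0\<close> sum_nonneg_eq_0_iff[of "{..<n}" "p i"] p0 that unfolding c by auto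
    then show ?thesis unfolding T_def using \<open>c i = 0\<close> by simp
  qed
  have "(\<Sum>i\<in>{i. i < m \<and> c i > 0}. c i * S i) \<le> (\<Sum>i\<in>{i. i < m \<and> c i > 0}. T i)"
    by (rule sum_mono) (use le in auto)
  also have "\<dots> = (\<Sum>i<m. T i)"
    by (rule sum.mono_neutral_left) (use T0 c0 in \<open>auto simp: le_less\<close>)
  finally show ?thesis unfolding T_def by (simp add: sum.distrib sum_negf sum_subtractf)
qed

lemma vN_entropy_red_C_eigenbasis:
  assumes R: "R \<in> carrier_mat (m * n) (m * n)" and u: "eigenbasis m (red_C m n R) u" and v: "onb n v"
  shows "vN_entropy (red_C m n R) =
    - (\<Sum>i<m. (\<Sum>l<n. Re (qform R (tens m n (u i) (v l)))) * ln (\<Sum>l<n. Re (qform R (tens m n (u i) (v l)))))"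
proof -
  have uo: "onb m u" using u unfolding eigenbasis_def by auto
  have M: "red_C m n R \<in> carrier_mat m m" by (simp add: red_C_def)
  have "Re (cinner_vec (u i) (red_C m n R *\<^sub>v u i)) = (\<Sum>l<n. Re (qform R (tens m n (u i) (v l))))"
    if "i < m" for i
    unfolding red_C_def cinner_vec_ptrace_P[OF R v onb_carrier[OF uo that] onb_carrier[OF uo that]]
    using qform_eq_cinner_vec[OF R tens_carrier] by (simp add: Re_sum)
  then show ?thesis
    using vN_entropy_eigenbasis[OF M uo eigenbasis_eigenvalue[OF u M]] by simp
qed

lemma meas_cond_entropy_le_dephased_cond_entropy:
  assumes p: "psd (m * n) R" and u: "eigenbasis m (red_C m n R) u" and v: "onb n v"
  shows "meas_cond_entropy m n u R \<le> vN_entropy (dephase m n u v R) - vN_entropy (red_C m n R)"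
proof -
  have R: "R \<in> carrier_mat (m * n) (m * n)" using psd_carrier[OF p] .
  have uo: "onb m u" using u unfolding eigenbasis_def by auto
  define p' where "p' i l = Re (qform R (tens m n (u i) (v l)))" for i l
  define c where "c i = (\<Sum>l<n. p' i l)" for i
  have mp: "meas_prob m n u R i = c i" if "i < m" for i
    unfolding meas_prob_eq(1)[OF p v uo that] c_def p'_def ..
  have "meas_cond_entropy m n u R = (\<Sum>i\<in>{i. i < m \<and> c i > 0}. c i * vN_entropy (cond_state m n u R i))"
    unfolding meas_cond_entropy_def using mp by (intro sum.cong) auto
  also have "\<dots> \<le> - (\<Sum>i<m. \<Sum>l<n. p' i l * ln (p' i l)) + (\<Sum>i<m. c i * ln (c i))"
  proof (rule entropy_chain_bound)
    show "p' i l \<ge> 0" for i l unfolding p'_def using psd_qform[OF p tens_carrier] by simp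
    fix i assume i: "i < m" and pos: "c i > 0"
    let ?\<sigma> = "cond_state m n u R i"
    have "Re (cinner_vec (v l) (?\<sigma> *\<^sub>v v l)) = p' i l / c i" if l: "l < n" for l
      unfolding cond_state_eq mp[OF i] smult_mat_mult_vec[OF ptrace_C_carrier onb_carrier[OF v l]]
        p'_def qform_eq_cinner_vec[OF R tens_carrier]
        cinner_vec_ptrace_C_kron_proj[OF R onb_carrier[OF uo i] onb_carrier[OF v l] onb_carrier[OF v l], symmetric]
      using onb_carrier[OF v l] mult_mat_vec_carrier[OF ptrace_C_carrier onb_carrier[OF v l]]
      by (simp add: cinner_vec_smult_right carrier_vecD)
    then show "vN_entropy ?\<sigma> \<le> - (\<Sum>l<n. (p' i l / c i) * ln (p' i l / c i))"
      using vN_entropy_le_diagonal_entropy[OF cond_state_density(1)[OF p uo i] v] pos mp[OF i] by simp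
  qed (simp add: c_def)
  also have "\<dots> = vN_entropy (dephase m n u v R) - vN_entropy (red_C m n R)"
    unfolding vN_entropy_dephase[OF uo v R] vN_entropy_red_C_eigenbasis[OF R u v] p'_def c_def by simp
  finally show ?thesis .
qed

lemma MID_eq_entropy_increase:
  assumes R: "R \<in> carrier_mat (m * n) (m * n)"
    and u: "eigenbasis m (red_C m n R) u" and v: "eigenbasis n (red_P m n R) v"
  shows "MID m n u v R = vN_entropy (dephase m n u v R) - vN_entropy R"
  using red_C_dephase[OF u _ R] red_P_dephase[OF _ v R] u v
  unfolding MID_def mutual_info_def eigenbasis_def by simp

lemma discord_le_meas_cond_entropy:
  assumes p: "psd (m * n) R" and w: "onb m w"
  shows "discord m n R \<le> meas_cond_entropy m n w R - cond_entropy m n R"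
proof -
  have "bdd_below ((\<lambda>w. meas_cond_entropy m n w R) ` {w. onb m w})"
    using meas_cond_entropy_nonneg[OF p] by (intro bdd_belowI[of _ 0]) auto
  then have "(INF w \<in> {w. onb m w}. meas_cond_entropy m n w R) \<le> meas_cond_entropy m n w R"
    by (rule cINF_lower) (use w in simp)
  then show ?thesis unfolding discord_def by simp
qed

theorem theorem2:
  fixes m n :: nat and \<rho> :: "complex mat" and u v :: "nat \<Rightarrow> complex vec"
  assumes "density (m * n) \<rho>"
    and "eigenbasis m (red_C m n \<rho>) u"
    and "eigenbasis n (red_P m n \<rho>) v"
  shows "discord m n \<rho> \<le> MID m n u v \<rho>"
proof -
  have p: "psd (m * n) \<rho>" using density_imp_psd[OF assms(1)] .
  have u: "onb m u" and v: "onb n v" using assms(2,3) unfolding eigenbasis_def by auto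
  have "discord m n \<rho> \<le> meas_cond_entropy m n u \<rho> - cond_entropy m n \<rho>"
    by (rule discord_le_meas_cond_entropy[OF p u])
  also have "\<dots> \<le> vN_entropy (dephase m n u v \<rho>) - vN_entropy (red_C m n \<rho>) - cond_entropy m n \<rho>"
    using meas_cond_entropy_le_dephased_cond_entropy[OF p assms(2) v] by simp
  also have "\<dots> = MID m n u v \<rho>"
    unfolding MID_eq_entropy_increase[OF psd_carrier[OF p] assms(2,3)] cond_entropy_def by simp
  finally show ?thesis .
qed

end
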